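(* Let $\alpha,\beta$ be reals with $2>\alpha>\beta\geq1$ and let $\ell_0=\ell_0(\alpha,\beta)$. Let $\mathcal{F}$ be a family of bipartite graphs such that there are constants $\rho>0$ and $C$ with $z(m,n,\mathcal{F})\leq \rho m n^{\alpha-1}+Cn^{\beta}$ for all positive integers $m\leq n$. For every real $\delta>0$ there is a real $\mu'>0$ depending only on $\alpha,\beta,\rho,\delta$ such that for all sufficiently large $n$ the following holds. Let $G$ be an $\mathcal{F}$-free bipartite graph with at most $n$ vertices and minimum degree at least $\delta n^{\alpha-1}$, and let $u\in V(G)$. Then there exist a set $S\subseteq V(G)$ with $|S|\geq \mu' n$ and a family $\mathcal{P}=\{P_v: v\in S\}$, where each $P_v$ is a path from $u$ to $v$ of length at most $\ell_0$, such that no vertex other than $u$ lies on more than $n/\log n$ of the paths in $\mathcal{P}$.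
   Context: $z(m,n,\mathcal{F})$ is the maximum number of edges in an $\mathcal{F}$-free bipartite graph with parts of sizes $m$ and $n$ ($\mathcal{F}$-free: containing no member of $\mathcal{F}$ as a subgraph). For reals $2>\alpha>\beta\geq1$, define $\ell_0(\alpha,\beta)=\left\lfloor \log_{\beta}\frac{(2-\beta)(\alpha-1)}{\alpha-\beta}\right\rfloor+2$ if $\beta>1$, and $\ell_0(\alpha,\beta)=\lfloor 1/(\alpha-1)\rfloor+1$ if $\beta=1$. *)

theory Defs
  imports Complex_Main
begin

definition graph :: "'a set \<Rightarrow> 'a set set \<Rightarrow> bool" where
  "graph V E \<longleftrightarrow> (\<forall>e\<in>E. \<exists>x y. x \<noteq> y \<and> x \<in> V \<and> y \<in> V \<and> e = {x, y})"

definition bipartite :: "'a set \<Rightarrow> 'a set set \<Rightarrow> bool" where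
  "bipartite V E \<longleftrightarrow> graph V E \<and>
     (\<exists>A B. A \<inter> B = {} \<and> A \<union> B = V \<and> (\<forall>e\<in>E. \<exists>a\<in>A. \<exists>b\<in>B. e = {a, b}))"

definition contains_subgraph :: "'a set \<Rightarrow> 'a set set \<Rightarrow> ('b set \<times> 'b set set) \<Rightarrow> bool" where
  "contains_subgraph V E H \<longleftrightarrow>
     (\<exists>f. inj_on f (fst H) \<and> f ` (fst H) \<subseteq> V \<and> (\<forall>e\<in>snd H. f ` e \<in> E))"

definition F_free :: "('b set \<times> 'b set set) set \<Rightarrow> 'a set \<Rightarrow> 'a set set \<Rightarrow> bool" where
  "F_free F V E \<longleftrightarrow> \<not> (\<exists>H\<in>F. contains_subgraph V E H)"

definition zar :: "nat \<Rightarrow> nat \<Rightarrow> ('b set \<times> 'b set set) set \<Rightarrow> nat" where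
  "zar m n F = Max {card E | A B (E :: nat set set).
      finite A \<and> finite B \<and> A \<inter> B = {} \<and> card A = m \<and> card B = n \<and>
      E \<subseteq> {{a, b} | a b. a \<in> A \<and> b \<in> B} \<and> F_free F (A \<union> B) E}"

definition degree :: "'a set \<Rightarrow> 'a set set \<Rightarrow> 'a \<Rightarrow> nat" where
  "degree V E x = card {y \<in> V. {x, y} \<in> E}"

text \<open>A path from u to v: a nonempty list of distinct vertices, consecutive ones adjacent;
  its length (number of edges) is length p - 1.\<close>
definition is_path :: "'a set \<Rightarrow> 'a set set \<Rightarrow> 'a \<Rightarrow> 'a \<Rightarrow> 'a list \<Rightarrow> bool" where
  "is_path V E u v p \<longleftrightarrow> p \<noteq> [] \<and> hd p = u \<and> last p = v \<and> distinct p \<and> set p \<subseteq> V \<and>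
     (\<forall>i. Suc i < length p \<longrightarrow> {p ! i, p ! Suc i} \<in> E)"

definition ell0 :: "real \<Rightarrow> real \<Rightarrow> nat" where
  "ell0 \<alpha> \<beta> = (if \<beta> > 1
     then nat (\<lfloor>log \<beta> ((2 - \<beta>) * (\<alpha> - 1) / (\<alpha> - \<beta>))\<rfloor> + 2)
     else nat (\<lfloor>1 / (\<alpha> - 1)\<rfloor> + 1))"

end

theory Submission
  imports Defs
begin

text \<open>Grow a tree from \<open>u\<close> layer by layer. The edges between a set \<open>P\<close> of \<open>p\<close> vertices of
  one side and its neighbourhood form an \<open>F\<close>-free bipartite graph with at least
  \<open>p * \<delta> * n powr (\<alpha> - 1)\<close> edges, so the Zarankiewicz bound forces \<open>P\<close> to have at least
  \<open>min (c * n) ((p * \<delta> * n powr (\<alpha> - 1) / (2 * C)) powr (1 / \<beta>))\<close> neighbours. Choosing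
  children greedily, every vertex of the deepest layer taking at most about \<open>2 * t (k + 1) / t k\<close>
  of them, the layer sizes therefore grow like \<open>n powr e k\<close> with \<open>e (k + 1) = (e k + \<alpha> - 1) / \<beta>\<close>
  until a layer of linear size appears; since \<open>e (ell0 - 1) > 1\<close>, this happens within depth
  \<open>ell0\<close>. The cap on the number of children gives a vertex of depth \<open>j\<close> at most
  \<open>3 ^ (i - j) * t i / t j\<close> descendants at depth \<open>i\<close>, so it lies on at most
  \<open>(ell0 + 1) * 3 ^ ell0 * n / (\<delta> * n powr (\<alpha> - 1))\<close> of the root paths, which is
  eventually below \<open>n / ln n\<close>.\<close>

fun growth_exp :: "real \<Rightarrow> real \<Rightarrow> nat \<Rightarrow> real" where
  "growth_exp \<alpha> \<beta> 0 = \<alpha> - 1"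
| "growth_exp \<alpha> \<beta> (Suc k) = (growth_exp \<alpha> \<beta> k + \<alpha> - 1) / \<beta>"

lemma growth_exp_beta_one: "growth_exp \<alpha> 1 k = real (Suc k) * (\<alpha> - 1)"
  by (induction k) (auto simp: algebra_simps)

lemma growth_exp_closed_form:
  assumes "\<beta> > 1"
  shows "growth_exp \<alpha> \<beta> k = (\<alpha>-1)/(\<beta>-1) - ((\<alpha>-1)/(\<beta>-1) - (\<alpha>-1)) / \<beta>^k"
proof (induction k)
  case 0 then show ?case by simp
next
  case (Suc k)
  define E where "E = (\<alpha>-1)/(\<beta>-1)"
  have b: "\<beta> - 1 \<noteq> 0" "\<beta> \<noteq> 0" using assms by auto
  have EE: "E + \<alpha> - 1 = \<beta> * E" using b unfolding E_def by (simp add: field_simps)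
  have "growth_exp \<alpha> \<beta> (Suc k) = (E - (E - (\<alpha>-1)) / \<beta>^k + \<alpha> - 1) / \<beta>"
    using Suc unfolding E_def by simp
  also have "\<dots> = (\<beta> * E - (E - (\<alpha>-1)) / \<beta>^k) / \<beta>" using EE by (simp add: algebra_simps)
  also have "\<dots> = E - (E - (\<alpha>-1)) / \<beta>^(Suc k)" using b by (simp add: field_simps)
  finally show ?case unfolding E_def .
qed

lemma ell0_log_argument_ge_1:
  fixes \<alpha> \<beta> :: real
  assumes "\<alpha> < 2" "\<beta> < \<alpha>" "1 \<le> \<beta>"
  shows "(2 - \<beta>) * (\<alpha> - 1) / (\<alpha> - \<beta>) \<ge> 1"
proof -
  have "(2 - \<beta>) * (\<alpha> - 1) - (\<alpha> - \<beta>) = (2 - \<alpha>) * (\<beta> - 1)" by (simp add: algebra_simps)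
  also have "\<dots> \<ge> 0" using assms by auto
  finally show ?thesis using assms by (simp add: field_simps)
qed

lemma ell0_ge_2:
  assumes "\<alpha> < 2" "\<beta> < \<alpha>" "1 \<le> \<beta>"
  shows "ell0 \<alpha> \<beta> \<ge> 2"
proof (cases "\<beta> > 1")
  case True
  then have "log \<beta> ((2 - \<beta>) * (\<alpha> - 1) / (\<alpha> - \<beta>)) \<ge> 0"
    using ell0_log_argument_ge_1[OF assms] by simp
  then have "\<lfloor>log \<beta> ((2 - \<beta>) * (\<alpha> - 1) / (\<alpha> - \<beta>))\<rfloor> \<ge> 0" by simp
  then show ?thesis using True unfolding ell0_def by (simp add: le_nat_iff)
next
  case False
  then have "\<beta> = 1" using assms by auto
  then have "1 / (\<alpha> - 1) \<ge> 1" using assms by (simp add: field_simps)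
  then have "nat (\<lfloor>1 / (\<alpha> - 1)\<rfloor> + 1) \<ge> 2" by linarith
  then show ?thesis using False unfolding ell0_def by simp
qed

text \<open>This is what the choice of \<open>ell0\<close> is for: after \<open>ell0 - 1\<close> expansion steps the
  layer sizes \<open>n powr growth_exp \<alpha> \<beta> k\<close> would exceed \<open>n\<close>.\<close>

lemma growth_exp_ell0_gt_1:
  assumes "\<alpha> < 2" "\<beta> < \<alpha>" "1 \<le> \<beta>"
  shows "growth_exp \<alpha> \<beta> (ell0 \<alpha> \<beta> - 1) > 1"
proof (cases "\<beta> > 1")
  case True
  define x where "x = (2 - \<beta>) * (\<alpha> - 1) / (\<alpha> - \<beta>)"
  define k where "k = ell0 \<alpha> \<beta> - 1"
  have x1: "x \<ge> 1" unfolding x_def by (rule ell0_log_argument_ge_1[OF assms])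
  have lg: "log \<beta> x \<ge> 0" using True x1 by simp
  have "k = nat (\<lfloor>log \<beta> x\<rfloor> + 1)"
    using True lg unfolding ell0_def x_def k_def by simp
  then have kr: "real k > log \<beta> x" using lg by linarith
  have "\<beta> ^ k = \<beta> powr real k" using True by (simp add: powr_realpow)
  also have "\<dots> > \<beta> powr (log \<beta> x)" using kr True by (intro powr_less_mono) auto
  also have "\<beta> powr (log \<beta> x) = x" using True x1 by simp
  finally have bk: "\<beta> ^ k > x" .
  have "\<beta> ^ k > 0" using True by simp
  have h: "\<alpha> - \<beta> \<noteq> 0" "\<beta> - 1 \<noteq> 0" using True assms by auto
  have e1: "(\<alpha>-1)/(\<beta>-1) - 1 > 0" using True assms by (simp add: field_simps)
  have "x * ((\<alpha>-1)/(\<beta>-1) - 1) = x * ((\<alpha>-\<beta>)/(\<beta>-1))"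
    using h by (simp add: field_simps)
  also have "\<dots> = (2 - \<beta>) * (\<alpha> - 1) / (\<beta> - 1)"
    using h unfolding x_def by simp
  also have "\<dots> = (\<alpha>-1)/(\<beta>-1) - (\<alpha>-1)"
    using h by (simp add: field_simps)
  finally have "(\<alpha>-1)/(\<beta>-1) - (\<alpha>-1) = x * ((\<alpha>-1)/(\<beta>-1) - 1)" ..
  also have "\<dots> < \<beta>^k * ((\<alpha>-1)/(\<beta>-1) - 1)" using bk e1 by simp
  finally have "((\<alpha>-1)/(\<beta>-1) - (\<alpha>-1)) / \<beta>^k < (\<alpha>-1)/(\<beta>-1) - 1"
    using \<open>\<beta> ^ k > 0\<close> by (simp add: divide_less_eq mult.commute)
  then show ?thesis using growth_exp_closed_form[OF True, of \<alpha> k] unfolding k_def by linarith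
next
  case False
  then have b1: "\<beta> = 1" using assms by auto
  have a1: "\<alpha> - 1 > 0" using assms b1 by simp
  have "ell0 \<alpha> \<beta> - 1 = nat \<lfloor>1 / (\<alpha> - 1)\<rfloor>" using False unfolding ell0_def by simp
  moreover have "1 / (\<alpha> - 1) \<ge> 1" using assms b1 by (simp add: field_simps)
  ultimately have "real (Suc (ell0 \<alpha> \<beta> - 1)) > 1 / (\<alpha> - 1)" by linarith
  then have "real (Suc (ell0 \<alpha> \<beta> - 1)) * (\<alpha> - 1) > 1"
    using a1 by (simp add: field_simps)
  then show ?thesis using growth_exp_beta_one b1 by simp
qed

lemma root_le_of_powr_ge:
  fixes a c m y :: real
  assumes "0 < y" "0 \<le> m" "0 < a" "0 \<le> c" and "c * m powr a \<le> y powr a"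
  shows "c powr (1/a) * m \<le> y"
proof -
  have "(c powr (1/a) * m) powr a = c * m powr a"
    using assms by (simp add: powr_mult powr_powr)
  also have "\<dots> \<le> y powr a" by (fact assms(5))
  finally have le: "(c powr (1/a) * m) powr a \<le> y powr a" .
  show ?thesis
  proof (rule ccontr)
    assume "\<not> ?thesis"
    then have "y powr a < (c powr (1/a) * m) powr a"
      using assms by (intro powr_less_mono2) auto
    then show False using le by simp
  qed
qed

lemma unbalanced_expansion:
  fixes p y m D C \<rho> \<alpha> \<beta> :: real
  assumes "0 < y" "y < p" "p \<le> m" "1 \<le> p" "\<rho> > 0" "C > 0" "\<alpha> < 2" "1 \<le> \<beta>"
    and "2 * C * m powr (\<beta>-1) < D"
    and "p * D \<le> \<rho> * y * p powr (\<alpha>-1) + C * p powr \<beta>"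
  shows "\<rho> * y powr (\<alpha>-1) > D/2"
proof -
  have Dpos: "D > 0" using assms(6,9) by (smt (verit) mult_nonneg_nonneg powr_ge_zero)
  have "C * p powr \<beta> = p * (C * p powr (\<beta>-1))" using assms(4) by (simp add: powr_diff)
  also have "\<dots> \<le> p * (C * m powr (\<beta>-1))"
    using assms by (intro mult_left_mono powr_mono2) auto
  also have "\<dots> < p * (D/2)" using assms(4,9) by (intro mult_strict_left_mono) auto
  finally have "p powr (\<alpha>-1) * p powr (2-\<alpha>) * (D/2) < p powr (\<alpha>-1) * (\<rho> * y)"
    using assms(4,10) by (simp add: powr_add[symmetric] algebra_simps)
  then have "p powr (2-\<alpha>) * (D/2) < \<rho> * y"
    using assms(4) by (simp add: mult.assoc)
  moreover have "y powr (2-\<alpha>) * (D/2) \<le> p powr (2-\<alpha>) * (D/2)"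
    using assms Dpos by (intro mult_right_mono powr_mono2) auto
  ultimately have "y powr (2-\<alpha>) * (D/2) < y powr (2-\<alpha>) * (\<rho> * y powr (\<alpha>-1))"
    using assms(1) by (simp add: powr_add[symmetric] algebra_simps)
  then show ?thesis using assms(1) by simp
qed

text \<open>The numerical core of the expansion argument: a set of \<open>p\<close> vertices of minimum
  degree \<open>D\<close> spans at least \<open>p * D\<close> edges to its \<open>y\<close> neighbours, which the Zarankiewicz
  bound (for whichever of \<open>p\<close>, \<open>y\<close> is smaller) only allows if \<open>y\<close> is large.\<close>

lemma expansion_bound:
  fixes p y m D C \<rho> \<alpha> \<beta> \<delta> :: real
  assumes "1 \<le> p" "p \<le> m" "0 < y" "\<rho> > 0" "C > 0" "1 < \<alpha>" "\<alpha> < 2" "1 \<le> \<beta>" "\<delta> > 0"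
    and D: "D = \<delta> * m powr (\<alpha>-1)" and small: "2 * C * m powr (\<beta>-1) < D"
    and balanced: "p \<le> y \<Longrightarrow> p * D \<le> \<rho> * p * y powr (\<alpha>-1) + C * y powr \<beta>"
    and unbalanced: "y < p \<Longrightarrow> p * D \<le> \<rho> * y * p powr (\<alpha>-1) + C * p powr \<beta>"
  shows "min ((\<delta>/(2*\<rho>)) powr (1/(\<alpha>-1)) * m) ((p * D/(2*C)) powr (1/\<beta>)) \<le> y"
proof -
  have "\<rho> * y powr (\<alpha>-1) \<ge> D/2 \<or> C * y powr \<beta> \<ge> p * D/2"
  proof (cases "p \<le> y")
    case True
    then have "p * (\<rho> * y powr (\<alpha>-1)) \<ge> p * (D/2) \<or> C * y powr \<beta> \<ge> p * D/2"
      using balanced by (auto simp: algebra_simps)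
    then show ?thesis using assms(1) by auto
  next
    case False
    then show ?thesis using unbalanced_expansion assms by (smt (verit))
  qed
  then show ?thesis
  proof
    assume "\<rho> * y powr (\<alpha>-1) \<ge> D/2"
    then have "\<delta>/(2*\<rho>) * m powr (\<alpha>-1) \<le> y powr (\<alpha>-1)" using assms(4) D by (simp add: field_simps)
    then have "(\<delta>/(2*\<rho>)) powr (1/(\<alpha>-1)) * m \<le> y"
      using assms by (intro root_le_of_powr_ge) auto
    then show ?thesis by simp
  next
    assume "C * y powr \<beta> \<ge> p * D/2"
    then have "p * D/(2*C) \<le> y powr \<beta>" using assms(5) by (simp add: field_simps)
    then have "(p * D/(2*C)) powr (1/\<beta>) \<le> (y powr \<beta>) powr (1/\<beta>)"
      using assms small by (intro powr_mono2) (auto intro!: divide_nonneg_pos)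
    also have "\<dots> = y" using assms by (simp add: powr_powr)
    finally show ?thesis by simp
  qed
qed

text \<open>Target layer sizes of the tree built below: \<open>D\<close> is the minimum degree, \<open>cap\<close> the linear
  size at which the construction stops, and \<open>C\<close> the constant of the Zarankiewicz bound.\<close>

fun layer_size :: "real \<Rightarrow> real \<Rightarrow> real \<Rightarrow> real \<Rightarrow> nat \<Rightarrow> nat" where
  "layer_size D cap C \<beta> 0 = 1"
| "layer_size D cap C \<beta> (Suc 0) = nat \<lceil>D\<rceil>"
| "layer_size D cap C \<beta> (Suc (Suc k)) =
     nat \<lceil>min cap ((real (layer_size D cap C \<beta> (Suc k)) * D / (4*C)) powr (1/\<beta>)) / 4\<rceil>"

lemma layer_size_Suc:
  "k \<ge> 1 \<Longrightarrow> layer_size D cap C \<beta> (Suc k) =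
     nat \<lceil>min cap ((real (layer_size D cap C \<beta> k) * D / (4*C)) powr (1/\<beta>)) / 4\<rceil>"
  by (cases k) auto

lemma layer_size_ge_1:
  assumes "D > 0" "cap > 0" "C > 0"
  shows "layer_size D cap C \<beta> k \<ge> 1"
proof (induction k)
  case (Suc k)
  then show ?case using assms by (cases k) (auto simp: Suc_le_eq)
qed simp

lemma layer_size_step:
  fixes D cap C \<beta> m :: real
  assumes D: "D > 0" and C: "C > 0" and b: "\<beta> \<ge> 1" and k: "k \<ge> 1"
    and sm: "real (layer_size D cap C \<beta> k) \<le> m" and sc: "real (layer_size D cap C \<beta> k) < cap/8"
    and big: "32 * 8 powr \<beta> * C * m powr (\<beta>-1) \<le> D"
  shows "2 * layer_size D cap C \<beta> k \<le> layer_size D cap C \<beta> (Suc k)"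
    and "real (layer_size D cap C \<beta> (Suc k)) + 1 + 2 * real (layer_size D cap C \<beta> k)
          \<le> min cap ((real (layer_size D cap C \<beta> k) * D / (4*C)) powr (1/\<beta>))"
proof -
  define s where "s = real (layer_size D cap C \<beta> k)"
  define M where "M = min cap ((s * D / (4*C)) powr (1/\<beta>))"
  have cap: "cap > 0" using sc by simp
  have s1: "s \<ge> 1" unfolding s_def using layer_size_ge_1[OF D cap C] by simp
  have next_eq: "real (layer_size D cap C \<beta> (Suc k)) = real_of_int \<lceil>M/4\<rceil>"
    using cap unfolding layer_size_Suc[OF k] M_def s_def by simp
  have "s * 8 powr \<beta> * s powr (\<beta>-1) * (32*C) \<le> s * 8 powr \<beta> * m powr (\<beta>-1) * (32*C)"
    using s1 sm b C unfolding s_def by (intro mult_right_mono mult_left_mono powr_mono2) auto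
  also have "\<dots> \<le> s * D" using big s1 by (simp add: mult_ac)
  finally have "(8*s) powr \<beta> * (32*C) \<le> s * D"
    using s1 by (simp add: powr_mult powr_diff mult_ac)
  then have "(8*s) powr \<beta> * (4*C) \<le> s * D"
    using C by (smt (verit) mult_left_mono powr_ge_zero)
  then have "(8*s) powr \<beta> \<le> s * D / (4*C)" using C by (simp add: field_simps)
  then have "((8*s) powr \<beta>) powr (1/\<beta>) \<le> (s * D / (4*C)) powr (1/\<beta>)"
    using b by (intro powr_mono2) auto
  then have "8*s \<le> M" unfolding M_def using s1 b sc s_def by (simp add: powr_powr)
  then show "2 * layer_size D cap C \<beta> k \<le> layer_size D cap C \<beta> (Suc k)"
    and "real (layer_size D cap C \<beta> (Suc k)) + 1 + 2 * real (layer_size D cap C \<beta> k)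
          \<le> min cap ((real (layer_size D cap C \<beta> k) * D / (4*C)) powr (1/\<beta>))"
    using next_eq s1 unfolding s_def M_def by linarith+
qed

fun layer_coeff :: "real \<Rightarrow> real \<Rightarrow> real \<Rightarrow> nat \<Rightarrow> real" where
  "layer_coeff \<delta> C \<beta> 0 = \<delta>"
| "layer_coeff \<delta> C \<beta> (Suc k) = (layer_coeff \<delta> C \<beta> k * \<delta> / (4*C)) powr (1/\<beta>) / 4"

lemma layer_coeff_pos: "\<delta> > 0 \<Longrightarrow> C > 0 \<Longrightarrow> layer_coeff \<delta> C \<beta> k > 0"
  by (induction k) auto

lemma layer_coeff_powr_Suc:
  fixes \<delta> C \<beta> \<alpha> m :: real
  shows "4 * (layer_coeff \<delta> C \<beta> (Suc k) * m powr growth_exp \<alpha> \<beta> (Suc k))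
    = (layer_coeff \<delta> C \<beta> k * m powr growth_exp \<alpha> \<beta> k * (\<delta> * m powr (\<alpha>-1)) / (4*C)) powr (1/\<beta>)"
proof -
  have "4 * (layer_coeff \<delta> C \<beta> (Suc k) * m powr growth_exp \<alpha> \<beta> (Suc k))
      = (layer_coeff \<delta> C \<beta> k * \<delta> / (4*C)) powr (1/\<beta>) * m powr growth_exp \<alpha> \<beta> (Suc k)"
    by simp
  also have "\<dots> = (layer_coeff \<delta> C \<beta> k * \<delta> / (4*C)) powr (1/\<beta>)
      * (m powr (growth_exp \<alpha> \<beta> k + (\<alpha> - 1))) powr (1/\<beta>)"
    by (simp add: powr_powr add_diff_eq)
  also have "\<dots> = (layer_coeff \<delta> C \<beta> k * \<delta> / (4*C) * m powr (growth_exp \<alpha> \<beta> k + (\<alpha> - 1))) powr (1/\<beta>)"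
    by (rule powr_mult[symmetric])
  also have "layer_coeff \<delta> C \<beta> k * \<delta> / (4*C) * m powr (growth_exp \<alpha> \<beta> k + (\<alpha> - 1))
      = layer_coeff \<delta> C \<beta> k * m powr growth_exp \<alpha> \<beta> k * (\<delta> * m powr (\<alpha>-1)) / (4*C)"
    by (simp add: powr_add mult_ac)
  finally show ?thesis .
qed

lemma layer_size_growth:
  fixes D cap C \<beta> m \<delta> \<alpha> :: real
  assumes D: "D = \<delta> * m powr (\<alpha>-1)" and "\<delta> > 0" "C > 0" "\<beta> \<ge> 1" "m > 0" "cap > 0"
  shows "(\<exists>j\<in>{1..Suc k}. cap/8 \<le> real (layer_size D cap C \<beta> j))
    \<or> layer_coeff \<delta> C \<beta> k * m powr (growth_exp \<alpha> \<beta> k) \<le> real (layer_size D cap C \<beta> (Suc k))"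
proof (induction k)
  case 0
  have "D \<le> real (nat \<lceil>D\<rceil>)" by linarith
  then show ?case using D by simp
next
  case (Suc k)
  show ?case
  proof (cases "\<exists>j\<in>{1..Suc k}. cap/8 \<le> real (layer_size D cap C \<beta> j)")
    case True then show ?thesis by auto
  next
    case False
    define s where "s = real (layer_size D cap C \<beta> (Suc k))"
    define P where "P = (s * D / (4*C)) powr (1/\<beta>)"
    have "layer_coeff \<delta> C \<beta> k * m powr (growth_exp \<alpha> \<beta> k) \<le> s"
      using Suc False unfolding s_def by blast
    then have "4 * (layer_coeff \<delta> C \<beta> (Suc k) * m powr growth_exp \<alpha> \<beta> (Suc k)) \<le> P"
      unfolding layer_coeff_powr_Suc P_def D[symmetric]
      using assms layer_coeff_pos[of \<delta> C \<beta> k]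
      by (intro powr_mono2 divide_right_mono mult_right_mono) auto
    moreover have "real (layer_size D cap C \<beta> (Suc (Suc k))) \<ge> min cap P / 4"
      using assms(6) unfolding P_def s_def by simp
    ultimately show ?thesis using assms(6) by (cases "cap \<le> P") force+
  qed
qed

lemma eventually_le_powr:
  fixes b K :: real
  assumes "b > 0"
  shows "\<exists>M\<ge>1. \<forall>x\<ge>M. K \<le> x powr b"
proof (intro exI[of _ "max 1 (\<bar>K\<bar> powr (1/b))"] conjI allI impI)
  fix x :: real assume x: "max 1 (\<bar>K\<bar> powr (1/b)) \<le> x"
  then have "\<bar>K\<bar> = (\<bar>K\<bar> powr (1/b)) powr b" using assms by (cases "K = 0") (simp_all add: powr_powr)
  also have "\<dots> \<le> x powr b" using x assms by (intro powr_mono2) auto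
  finally show "K \<le> x powr b" by linarith
qed simp

lemma eventually_powr_dominates:
  fixes a b c K :: real
  assumes "a < b" "c > 0"
  shows "\<exists>M\<ge>1. \<forall>x\<ge>M. K * x powr a \<le> c * x powr b"
proof -
  obtain M where M: "M \<ge> 1" "\<forall>x\<ge>M. K / c \<le> x powr (b - a)"
    using eventually_le_powr[of "b - a" "K / c"] assms(1) by auto
  have "K * x powr a \<le> c * x powr b" if "x \<ge> M" for x
  proof -
    have "K \<le> c * x powr (b - a)" using M that assms(2) by (simp add: field_simps)
    then have "K * x powr a \<le> c * x powr (b - a) * x powr a" by (intro mult_right_mono) auto
    also have "\<dots> = c * x powr b" using M that by (simp add: mult.assoc powr_add[symmetric])
    finally show ?thesis .
  qed
  then show ?thesis using M(1) by blast
qed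

lemma eventually_large_n:
  fixes \<alpha> \<beta> \<rho> \<delta> C :: real
  assumes "\<alpha> < 2" "\<beta> < \<alpha>" "1 \<le> \<beta>" "\<rho> > 0" "\<delta> > 0" "C > 0"
  shows "\<exists>N. \<forall>n\<ge>N. real n \<ge> 2
    \<and> 32 * 8 powr \<beta> * C * real n powr (\<beta>-1) \<le> \<delta> * real n powr (\<alpha>-1)
    \<and> real (ell0 \<alpha> \<beta> + 1) * 3^(ell0 \<alpha> \<beta>) * ln (real n) \<le> \<delta> * real n powr (\<alpha>-1)
    \<and> (\<delta>/(2*\<rho>)) powr (1/(\<alpha>-1)) * real n / 8
      \<le> layer_coeff \<delta> C \<beta> (ell0 \<alpha> \<beta> - 1) * real n powr growth_exp \<alpha> \<beta> (ell0 \<alpha> \<beta> - 1)"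
proof -
  define L where "L = ell0 \<alpha> \<beta>"
  define K where "K = real (L + 1) * 3^L * (2/(\<alpha>-1))"
  have a1: "\<alpha> - 1 > 0" using assms by simp
  obtain M1 where M1: "M1 \<ge> 1" "\<forall>x\<ge>M1. 32 * 8 powr \<beta> * C * x powr (\<beta>-1) \<le> \<delta> * x powr (\<alpha>-1)"
    using eventually_powr_dominates[of "\<beta>-1" "\<alpha>-1" \<delta>] assms by auto
  obtain M2 where M2: "M2 \<ge> 1" "\<forall>x\<ge>M2. K * x powr ((\<alpha>-1)/2) \<le> \<delta> * x powr (\<alpha>-1)"
    using eventually_powr_dominates[of "(\<alpha>-1)/2" "\<alpha>-1" \<delta>] assms a1 by auto
  obtain M3 where M3: "M3 \<ge> 1" "\<forall>x\<ge>M3. (\<delta>/(2*\<rho>)) powr (1/(\<alpha>-1)) / 8 * x powr 1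
      \<le> layer_coeff \<delta> C \<beta> (L - 1) * x powr growth_exp \<alpha> \<beta> (L - 1)"
    using eventually_powr_dominates[OF growth_exp_ell0_gt_1[OF assms(1-3)] layer_coeff_pos[OF assms(5,6)]]
    unfolding L_def by blast
  have "real (L + 1) * 3^L * ln x \<le> \<delta> * x powr (\<alpha>-1)" if "x \<ge> M2" for x
  proof -
    have "ln x \<le> x powr ((\<alpha>-1)/2) / ((\<alpha>-1)/2)" using that M2(1) a1 by (intro ln_powr_bound) auto
    also have "\<dots> = (2/(\<alpha>-1)) * x powr ((\<alpha>-1)/2)" by simp
    finally have "real (L + 1) * 3^L * ln x \<le> real (L + 1) * 3^L * ((2/(\<alpha>-1)) * x powr ((\<alpha>-1)/2))"
      by (intro mult_left_mono) auto
    then have "real (L + 1) * 3^L * ln x \<le> K * x powr ((\<alpha>-1)/2)"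
      unfolding K_def by (simp add: mult_ac)
    also have "\<dots> \<le> \<delta> * x powr (\<alpha>-1)" using M2 that by blast
    finally show ?thesis .
  qed
  moreover have "x powr 1 = x" if "x \<ge> M3" for x using M3(1) that by simp
  ultimately show ?thesis using M1 M3
    by (intro exI[of _ "nat \<lceil>max (max M1 M2) (max M3 2)\<rceil>"]) (auto simp: L_def)
qed

definition nbhd :: "'a set \<Rightarrow> 'a set set \<Rightarrow> 'a \<Rightarrow> 'a set" where
  "nbhd V E x = {y \<in> V. {x, y} \<in> E}"

definition nbhd_set :: "'a set \<Rightarrow> 'a set set \<Rightarrow> 'a set \<Rightarrow> 'a set" where
  "nbhd_set V E X = (\<Union>x\<in>X. nbhd V E x)"

lemma nbhd_set_subset: "nbhd_set V E X \<subseteq> V"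
  unfolding nbhd_set_def nbhd_def by auto

lemma degree_eq_card_nbhd: "degree V E x = card (nbhd V E x)"
  unfolding degree_def nbhd_def by simp

lemma nbhd_other_side:
  assumes "A \<inter> B = {}" "\<forall>e\<in>E. \<exists>a\<in>A. \<exists>b\<in>B. e = {a, b}" "x \<in> A" "y \<in> nbhd V E x"
  shows "y \<in> B"
proof -
  have "{x, y} \<in> E" using assms(4) unfolding nbhd_def by simp
  then obtain a b where "a \<in> A" "b \<in> B" "{x, y} = {a, b}" using assms(2) by blast
  then show ?thesis using assms(1,3) by (auto simp: doubleton_eq_iff)
qed

lemma bipartite_swap:
  "\<forall>e\<in>E. \<exists>a\<in>A. \<exists>b\<in>B. e = {a, b} \<Longrightarrow> \<forall>e\<in>E. \<exists>a\<in>B. \<exists>b\<in>A. e = {a, b}"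
  by (metis insert_commute)

lemma card_le_zar:
  fixes P Q :: "nat set" and E :: "nat set set"
  assumes "finite P" "finite Q" "P \<inter> Q = {}" "E \<subseteq> {{a, b} | a b. a \<in> P \<and> b \<in> Q}"
    and "F_free F (P \<union> Q) E"
  shows "card E \<le> zar (card P) (card Q) F"
proof -
  define S where "S = {card E | A B (E :: nat set set).
      finite A \<and> finite B \<and> A \<inter> B = {} \<and> card A = card P \<and> card B = card Q \<and>
      E \<subseteq> {{a, b} | a b. a \<in> A \<and> b \<in> B} \<and> F_free F (A \<union> B) E}"
  have "S \<subseteq> {..card P * card Q}"
  proof
    fix c assume "c \<in> S"
    then obtain A B and E' :: "nat set set" where c: "c = card E'" "finite A" "finite B"
      "card A = card P" "card B = card Q" "E' \<subseteq> (\<lambda>(a,b). {a,b}) ` (A \<times> B)"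
      unfolding S_def by fastforce
    have "card E' \<le> card ((\<lambda>(a,b). {a,b}) ` (A \<times> B))" using c by (intro card_mono) auto
    also have "\<dots> \<le> card (A \<times> B)" by (rule card_image_le) (use c in auto)
    finally show "c \<in> {..card P * card Q}" using c by (simp add: card_cartesian_product)
  qed
  then have "finite S" using finite_subset by blast
  moreover have "card E \<in> S" unfolding S_def using assms by blast
  ultimately show ?thesis unfolding zar_def S_def[symmetric] by (rule Max_ge)
qed

lemma F_free_inj_image:
  assumes inj: "inj_on h V" and free: "F_free F V E" and "E' \<subseteq> E" "\<forall>e\<in>E'. e \<subseteq> V"
    and "U \<subseteq> h ` V"
  shows "F_free F U (image h ` E')"
  unfolding F_free_def
proof
  assume "\<exists>H\<in>F. contains_subgraph U (image h ` E') H"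
  then obtain H f where H: "H \<in> F" "inj_on f (fst H)" "f ` fst H \<subseteq> U" "\<forall>e\<in>snd H. f ` e \<in> image h ` E'"
    unfolding contains_subgraph_def by blast
  define g where "g = inv_into V h \<circ> f"
  have "inj_on (inv_into V h) (f ` fst H)"
    by (rule inj_on_inv_into) (use H(3) assms(5) in blast)
  then have "inj_on g (fst H)" unfolding g_def by (rule comp_inj_on[OF H(2)])
  moreover have "g ` fst H \<subseteq> V"
    unfolding g_def using H(3) assms(5) by (auto intro!: inv_into_into)
  moreover have "g ` e \<in> E" if "e \<in> snd H" for e
  proof -
    have "f ` e \<in> image h ` E'" using H(4) that by blast
    then obtain e0 where e0: "e0 \<in> E'" "f ` e = h ` e0" by (metis imageE)
    then have "g ` e = e0" unfolding g_def image_comp[symmetric]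
      using assms(4) inj by (simp add: inv_into_image_cancel)
    then show ?thesis using e0(1) assms(3) by auto
  qed
  ultimately have "contains_subgraph V E H" unfolding contains_subgraph_def by blast
  then show False using free H(1) unfolding F_free_def by blast
qed

text \<open>The edges between a set \<open>X\<close> on one side and its neighbourhood form an \<open>F\<close>-free
  bipartite graph, which after relabelling the vertices by natural numbers is counted by \<open>zar\<close>.\<close>

lemma sum_degree_le_zar:
  fixes V :: "'a set" and E :: "'a set set"
  assumes fin: "finite V" and AB: "A \<inter> B = {}" "A \<union> B = V"
    and edges: "\<forall>e\<in>E. \<exists>a\<in>A. \<exists>b\<in>B. e = {a, b}" and free: "F_free F V E"
    and XA: "X \<subseteq> A"
  shows "(\<Sum>x\<in>X. degree V E x) \<le> zar (card X) (card (nbhd_set V E X)) F"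
    and "(\<Sum>x\<in>X. degree V E x) \<le> zar (card (nbhd_set V E X)) (card X) F"
proof -
  define Y where "Y = nbhd_set V E X"
  have XV: "X \<subseteq> V" using XA AB by auto
  have YB: "Y \<subseteq> B"
  proof
    fix y assume "y \<in> Y"
    then obtain x where "x \<in> X" "y \<in> nbhd V E x" unfolding Y_def nbhd_set_def by blast
    then show "y \<in> B" using nbhd_other_side[OF AB(1) edges] XA by blast
  qed
  have YV: "Y \<subseteq> V" unfolding Y_def nbhd_set_def nbhd_def by auto
  have fin': "finite X" "finite Y" using XV YV fin finite_subset by auto
  define Es where "Es = (\<lambda>(x,y). {x,y}) ` (SIGMA x:X. nbhd V E x)"
  have "inj_on (\<lambda>(x,y). {x,y}) (SIGMA x:X. nbhd V E x)"
  proof (rule inj_onI, clarsimp)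
    fix x y x' y' assume h: "x \<in> X" "y \<in> nbhd V E x" "x' \<in> X" "y' \<in> nbhd V E x'" "{x, y} = {x', y'}"
    have "y \<in> B" "y' \<in> B" using h nbhd_other_side[OF AB(1) edges] XA by blast+
    then show "x = x' \<and> y = y'" using h XA AB(1) by (auto simp: doubleton_eq_iff)
  qed
  then have "card Es = card (SIGMA x:X. nbhd V E x)" unfolding Es_def by (rule card_image)
  also have "\<dots> = (\<Sum>x\<in>X. degree V E x)"
    using fin'(1) fin by (simp add: card_SigmaI degree_eq_card_nbhd nbhd_def)
  finally have card_Es: "card Es = (\<Sum>x\<in>X. degree V E x)" .
  have Es_E: "Es \<subseteq> E" and Es_V: "\<forall>e\<in>Es. e \<subseteq> V" unfolding Es_def nbhd_def using XV by auto
  obtain h :: "'a \<Rightarrow> nat" and N where h: "h ` V = {i. i < N}" "inj_on h V"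
    using finite_imp_inj_to_nat_seg[OF fin] by blast
  have inj_img: "inj_on (image h) Es"
    using Es_V inj_on_image_eq_iff[OF h(2)] by (intro inj_onI) auto
  have disj: "h ` X \<inter> h ` Y = {}"
    using inj_on_image_Int[OF h(2) XV YV] XA YB AB(1) by auto
  have cross: "image h ` Es \<subseteq> {{a, b} | a b. a \<in> h ` X \<and> b \<in> h ` Y}"
  proof
    fix e assume "e \<in> image h ` Es"
    then obtain x y where "x \<in> X" "y \<in> nbhd V E x" "e = h ` {x, y}" unfolding Es_def by blast
    moreover have "y \<in> Y" using calculation unfolding Y_def nbhd_set_def by blast
    ultimately show "e \<in> {{a, b} | a b. a \<in> h ` X \<and> b \<in> h ` Y}" by auto
  qed
  have cross': "image h ` Es \<subseteq> {{a, b} | a b. a \<in> h ` Y \<and> b \<in> h ` X}"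
  proof
    fix e assume "e \<in> image h ` Es"
    then obtain a b where "e = {a, b}" "a \<in> h ` X" "b \<in> h ` Y" using cross by blast
    then show "e \<in> {{a, b} | a b. a \<in> h ` Y \<and> b \<in> h ` X}" by (blast intro: insert_commute)
  qed
  have free': "F_free F (h ` X \<union> h ` Y) (image h ` Es)"
    using XV YV by (intro F_free_inj_image[OF h(2) free Es_E Es_V]) auto
  have cards: "card (h ` X) = card X" "card (h ` Y) = card Y" "card (image h ` Es) = card Es"
    using inj_on_subset[OF h(2) XV] inj_on_subset[OF h(2) YV] inj_img by (simp_all add: card_image)
  show "(\<Sum>x\<in>X. degree V E x) \<le> zar (card X) (card (nbhd_set V E X)) F"
    using card_le_zar[OF _ _ disj cross free'] fin' cards card_Es unfolding Y_def by simp
  show "(\<Sum>x\<in>X. degree V E x) \<le> zar (card (nbhd_set V E X)) (card X) F"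
    using card_le_zar[of "h ` Y" "h ` X", OF _ _ _ cross'] disj free' fin' cards card_Es
    unfolding Y_def by (simp add: Un_commute Int_commute)
qed

lemma greedy_capped_assignment:
  fixes X :: "'a set" and N :: "'a \<Rightarrow> 'a set" and T :: "'a set" and K :: nat
  assumes "finite X" "\<forall>a\<in>X. finite (N a)"
  shows "\<exists>Y p. finite Y \<and> Y \<inter> T = {} \<and> (\<forall>y\<in>Y. p y \<in> X \<and> y \<in> N (p y)) \<and>
     (\<forall>a\<in>X. card {y\<in>Y. p y = a} \<le> K) \<and>
     (\<forall>a\<in>X. card {y\<in>Y. p y = a} = K \<or> N a \<subseteq> Y \<union> T)"
  using assms
proof (induction X rule: finite_induct)
  case empty
  show ?case by (rule exI[of _ "{}"]) simp
next
  case (insert a X)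
  then obtain Y p where Yp: "finite Y" "Y \<inter> T = {}" "\<forall>y\<in>Y. p y \<in> X \<and> y \<in> N (p y)"
     "\<forall>b\<in>X. card {y\<in>Y. p y = b} \<le> K" "\<forall>b\<in>X. card {y\<in>Y. p y = b} = K \<or> N b \<subseteq> Y \<union> T"
    by auto
  define R where "R = N a - Y - T"
  have finR: "finite R" unfolding R_def using insert.prems by auto
  obtain R' where R': "R' \<subseteq> R" "card R' \<le> K" "card R' = K \<or> R' = R"
  proof (cases "K \<le> card R")
    case True
    then obtain R' where "R' \<subseteq> R" "card R' = K" using obtain_subset_with_card_n by metis
    then show ?thesis using that by auto
  next
    case False
    then show ?thesis using that[of R] by auto
  qed
  have finR': "finite R'" using R'(1) finR finite_subset by blast
  define Y' where "Y' = Y \<union> R'"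
  define p' where "p' = (\<lambda>y. if y \<in> R' then a else p y)"
  have RY: "R' \<inter> Y = {}" using R'(1) unfolding R_def by auto
  have fa: "{y\<in>Y'. p' y = a} = R'"
  proof -
    have "\<And>y. y \<in> Y \<Longrightarrow> y \<notin> R' \<Longrightarrow> p y \<noteq> a" using Yp(3) insert.hyps(2) by metis
    then show ?thesis unfolding Y'_def p'_def by auto
  qed
  have fb: "\<And>b. b \<in> X \<Longrightarrow> {y\<in>Y'. p' y = b} = {y\<in>Y. p y = b}"
    unfolding Y'_def p'_def using RY insert.hyps(2) by auto
  show ?case
  proof (intro exI conjI)
    show "finite Y'" unfolding Y'_def using Yp(1) finR' by simp
    show "Y' \<inter> T = {}" unfolding Y'_def using Yp(2) R'(1) unfolding R_def by auto
    show "\<forall>y\<in>Y'. p' y \<in> insert a X \<and> y \<in> N (p' y)"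
      unfolding Y'_def p'_def using Yp(3) R'(1) unfolding R_def by auto
    show "\<forall>b\<in>insert a X. card {y\<in>Y'. p' y = b} \<le> K"
      using fa fb Yp(4) R'(2) by auto
    show "\<forall>b\<in>insert a X. card {y\<in>Y'. p' y = b} = K \<or> N b \<subseteq> Y' \<union> T"
    proof
      fix b assume b: "b \<in> insert a X"
      show "card {y\<in>Y'. p' y = b} = K \<or> N b \<subseteq> Y' \<union> T"
      proof (cases "b = a")
        case True
        then show ?thesis using fa R'(3) unfolding Y'_def R_def by auto
      next
        case False
        then have "b \<in> X" using b by auto
        then show ?thesis using fb Yp(5) unfolding Y'_def by auto
      qed
    qed
  qed
qed

definition descendants :: "'a set \<Rightarrow> ('a \<Rightarrow> nat) \<Rightarrow> ('a \<Rightarrow> 'a) \<Rightarrow> 'a \<Rightarrow> nat \<Rightarrow> 'a set" where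
  "descendants W dep par w i = {v\<in>W. dep v = i \<and> (par ^^ (i - dep w)) v = w}"

text \<open>The bound on \<open>card W\<close> reflects that the layer sizes at least double; the
  descendant bound is the invariant that controls how many root paths pass through a vertex.\<close>

definition layered_tree :: "'a set \<Rightarrow> 'a set set \<Rightarrow> 'a \<Rightarrow> nat \<Rightarrow> (nat \<Rightarrow> nat) \<Rightarrow> 'a set \<Rightarrow> ('a \<Rightarrow> nat) \<Rightarrow> ('a \<Rightarrow> 'a) \<Rightarrow> bool" where
  "layered_tree V E u k t W dep par \<longleftrightarrow> finite W \<and> W \<subseteq> V \<and> u \<in> W \<and> dep u = 0 \<and> par u = u \<and>
    (\<forall>v\<in>W. v \<noteq> u \<longrightarrow> par v \<in> W \<and> Suc (dep (par v)) = dep v \<and> {par v, v} \<in> E) \<and>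
    (\<forall>v\<in>W. dep v = 0 \<longrightarrow> v = u) \<and> (\<forall>v\<in>W. dep v \<le> k) \<and>
    (\<forall>j. 1 \<le> j \<and> j \<le> k \<longrightarrow> card {v\<in>W. dep v = j} = t j) \<and>
    card W \<le> 1 + 2 * t k \<and>
    (\<forall>w\<in>W. w \<noteq> u \<longrightarrow> (\<forall>i. dep w \<le> i \<longrightarrow>
        real (card (descendants W dep par w i)) \<le> 3^(i - dep w) * real (t i) / real (t (dep w))))"

lemma layered_tree_funpow_parent:
  assumes "layered_tree V E u k t W dep par" "v \<in> W"
  shows "(par^^m) v \<in> W \<and> dep ((par^^m) v) = dep v - m"
proof (induction m)
  case 0 then show ?case using assms(2) by simp
next
  case (Suc m)
  define z where "z = (par^^m) v"
  have z: "z \<in> W" "dep z = dep v - m" using Suc unfolding z_def by auto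
  have T: "dep u = 0" "par u = u" "\<forall>v\<in>W. v \<noteq> u \<longrightarrow> par v \<in> W \<and> Suc (dep (par v)) = dep v"
    using assms(1) unfolding layered_tree_def by auto
  have "par z \<in> W \<and> dep (par z) = dep v - Suc m"
  proof (cases "z = u")
    case True then show ?thesis using T z by auto
  next
    case False then show ?thesis using T z by force
  qed
  then show ?case unfolding z_def by simp
qed

lemma funpow_agree_on_closed:
  assumes "\<forall>x\<in>W. par' x = par x" "\<forall>x\<in>W. par x \<in> W" "v \<in> W"
  shows "(par'^^m) v = (par^^m) v \<and> (par^^m) v \<in> W"
  by (induction m) (use assms in auto)

lemma layered_tree_star:
  assumes u: "u \<in> V" and X1: "X1 \<subseteq> nbhd V E u" "card X1 = t 1" and fin: "finite V"
    and uX: "u \<notin> X1" and t1: "t 1 \<ge> 1"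
  shows "layered_tree V E u 1 t (insert u X1) (\<lambda>x. if x \<in> X1 then 1 else 0) (\<lambda>x. u)"
proof -
  define W where "W = insert u X1"
  define dep where "dep = (\<lambda>x. if x \<in> X1 then 1 else (0::nat))"
  have XV: "X1 \<subseteq> V" using X1 unfolding nbhd_def by auto
  have finX: "finite X1" using XV fin finite_subset by blast
  have descendants_leaf: "\<And>w i. w \<in> X1 \<Longrightarrow> descendants W dep (\<lambda>x. u) w i = (if i = 1 then {w} else {})"
  proof -
    fix w i assume w: "w \<in> X1"
    show "descendants W dep (\<lambda>x. u) w i = (if i = 1 then {w} else {})"
    proof (cases "i = 1")
      case True then show ?thesis unfolding descendants_def W_def dep_def using w uX by auto
    next
      case False
      have "\<And>v. v \<in> W \<Longrightarrow> dep v = i \<Longrightarrow> 1 \<le> i \<Longrightarrow> False" unfolding W_def dep_def using False uX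
        by (auto split: if_splits)
      then have "descendants W dep (\<lambda>x. u) w i = {}" if "1 \<le> i" unfolding descendants_def using that by blast
      moreover have "descendants W dep (\<lambda>x. u) w 0 = {}" unfolding descendants_def dep_def W_def using w uX by auto
      ultimately show ?thesis using False by (cases i) auto
    qed
  qed
  have lev: "{v\<in>W. dep v = 1} = X1" unfolding W_def dep_def using uX by auto
  show ?thesis unfolding W_def[symmetric] dep_def[symmetric] layered_tree_def
  proof (intro conjI)
    show "finite W" unfolding W_def using finX by simp
    show "W \<subseteq> V" unfolding W_def using XV u by simp
    show "u \<in> W" unfolding W_def by simp
    show "dep u = 0" unfolding dep_def using uX by simp
    show "(\<lambda>x. u) u = u" by simp
    show "\<forall>v\<in>W. v \<noteq> u \<longrightarrow> u \<in> W \<and> Suc (dep u) = dep v \<and> {u, v} \<in> E"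
      unfolding W_def dep_def using uX X1(1) unfolding nbhd_def by auto
    show "\<forall>v\<in>W. dep v = 0 \<longrightarrow> v = u" unfolding W_def dep_def by auto
    show "\<forall>v\<in>W. dep v \<le> 1" unfolding dep_def by auto
    show "\<forall>j. 1 \<le> j \<and> j \<le> 1 \<longrightarrow> card {v\<in>W. dep v = j} = t j"
    proof (intro allI impI)
      fix j :: nat assume "1 \<le> j \<and> j \<le> 1"
      then have "j = 1" by simp
      then show "card {v\<in>W. dep v = j} = t j" using lev X1(2) by simp
    qed
    show "card W \<le> 1 + 2 * t 1" unfolding W_def using finX uX X1(2) by simp
    show "\<forall>w\<in>W. w \<noteq> u \<longrightarrow> (\<forall>i. dep w \<le> i \<longrightarrow>
        real (card (descendants W dep (\<lambda>x. u) w i)) \<le> 3^(i - dep w) * real (t i) / real (t (dep w)))"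
    proof (intro ballI impI allI)
      fix w i assume w: "w \<in> W" "w \<noteq> u" "dep w \<le> i"
      then have wX: "w \<in> X1" unfolding W_def by auto
      show "real (card (descendants W dep (\<lambda>x. u) w i)) \<le> 3^(i - dep w) * real (t i) / real (t (dep w))"
      proof (cases "i = 1")
        case True then show ?thesis using descendants_leaf[OF wX] wX t1 unfolding dep_def by simp
      next
        case False then show ?thesis using descendants_leaf[OF wX] by simp
      qed
    qed
  qed
qed

lemma descendants_new_layer_le:
  assumes T: "layered_tree V E u k t W dep par"
    and Y: "finite Y" "Y \<inter> W = {}"
    and p: "\<forall>y\<in>Y. p y \<in> W \<and> dep (p y) = k"
    and cap: "\<forall>z\<in>W. dep z = k \<longrightarrow> card {y\<in>Y. p y = z} \<le> Kk"
    and Kk: "real Kk \<le> 3 * real (t (Suc k)) / real (t k)" and tk: "t k \<ge> 1"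
    and w: "w \<in> W" "w \<noteq> u"
  shows "real (card (descendants (W \<union> Y) (\<lambda>x. if x \<in> Y then Suc k else dep x)
      (\<lambda>x. if x \<in> Y then p x else par x) w (Suc k)))
    \<le> 3^(Suc k - dep w) * real (t (Suc k)) / real (t (dep w))"
proof -
  define dep' where "dep' = (\<lambda>x. if x \<in> Y then Suc k else dep x)"
  define par' where "par' = (\<lambda>x. if x \<in> Y then p x else par x)"
  have T0: "finite W" "u \<in> W" "par u = u" "\<forall>v\<in>W. v \<noteq> u \<longrightarrow> par v \<in> W"
    "\<forall>v\<in>W. dep v \<le> k"
    "\<forall>w\<in>W. w \<noteq> u \<longrightarrow> (\<forall>i. dep w \<le> i \<longrightarrow>
        real (card (descendants W dep par w i)) \<le> 3^(i - dep w) * real (t i) / real (t (dep w)))"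
    using T unfolding layered_tree_def by blast+
  have parW: "\<forall>x\<in>W. par x \<in> W" using T0(2-4) by metis
  have agree: "\<forall>x\<in>W. par' x = par x" unfolding par'_def using Y(2) by auto
  have it: "\<And>v m. v \<in> W \<Longrightarrow> (par'^^m) v = (par^^m) v"
    using funpow_agree_on_closed[OF agree parW] by blast
  define j where "j = dep w"
  have jk: "j \<le> k" using T0(5) w unfolding j_def by simp
  have wY: "w \<notin> Y" using Y(2) w(1) by auto
  define Dk where "Dk = descendants W dep par w k"
  have finDk: "finite Dk" unfolding Dk_def descendants_def using T0(1) by simp
  have sub: "descendants (W \<union> Y) dep' par' w (Suc k) \<subseteq> (\<Union>z\<in>Dk. {y\<in>Y. p y = z})"
  proof
    fix v assume "v \<in> descendants (W \<union> Y) dep' par' w (Suc k)"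
    then have v: "v \<in> W \<union> Y" "dep' v = Suc k" "(par'^^(Suc k - j)) v = w"
      unfolding descendants_def j_def dep'_def using wY by auto
    have vY: "v \<in> Y" using v(1,2) T0(5) unfolding dep'_def by (auto split: if_splits)
    have "Suc k - j = Suc (k - j)" using jk by simp
    then have "(par'^^(Suc k - j)) v = (par'^^(k - j)) (par' v)"
      by (metis funpow_Suc_right comp_apply)
    also have "par' v = p v" unfolding par'_def using vY by simp
    also have "(par'^^(k - j)) (p v) = (par^^(k - j)) (p v)" using it p vY by blast
    finally have "(par^^(k - j)) (p v) = w" using v(3) by simp
    then have "p v \<in> Dk" using p vY unfolding Dk_def descendants_def j_def by simp
    then show "v \<in> (\<Union>z\<in>Dk. {y\<in>Y. p y = z})" using vY by blast
  qed
  have "card (descendants (W \<union> Y) dep' par' w (Suc k)) \<le> card (\<Union>z\<in>Dk. {y\<in>Y. p y = z})"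
    using sub finDk Y(1) by (intro card_mono) auto
  also have "\<dots> \<le> (\<Sum>z\<in>Dk. card {y\<in>Y. p y = z})" by (rule card_UN_le[OF finDk])
  also have "\<dots> \<le> (\<Sum>z\<in>Dk. Kk)"
    using cap unfolding Dk_def descendants_def by (intro sum_mono) auto
  also have "\<dots> = card Dk * Kk" by simp
  finally have "real (card (descendants (W \<union> Y) dep' par' w (Suc k))) \<le> real (card Dk) * real Kk"
    by (metis of_nat_le_iff of_nat_mult)
  also have "\<dots> \<le> (3^(k - j) * real (t k) / real (t j)) * (3 * real (t (Suc k)) / real (t k))"
    using T0(6) w jk Kk unfolding Dk_def j_def by (intro mult_mono) auto
  also have "\<dots> = 3^(Suc k - j) * real (t (Suc k)) / real (t j)"
  proof -
    have "Suc k - j = Suc (k - j)" using jk by simp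
    moreover have "real (t k) > 0" using tk by simp
    ultimately show ?thesis by (simp add: field_simps)
  qed
  finally show ?thesis unfolding dep'_def par'_def j_def .
qed

lemma layered_tree_add_layer:
  assumes T: "layered_tree V E u k t W dep par" and k: "k \<ge> 1"
    and Y: "finite Y" "Y \<subseteq> V" "Y \<inter> W = {}" "card Y = t (Suc k)"
    and p: "\<forall>y\<in>Y. p y \<in> W \<and> dep (p y) = k \<and> {p y, y} \<in> E"
    and cap: "\<forall>z\<in>W. dep z = k \<longrightarrow> card {y\<in>Y. p y = z} \<le> Kk"
    and Kk: "real Kk \<le> 3 * real (t (Suc k)) / real (t k)"
    and grow: "2 * t k \<le> t (Suc k)" and tk: "t k \<ge> 1"
  shows "layered_tree V E u (Suc k) t (W \<union> Y) (\<lambda>x. if x \<in> Y then Suc k else dep x) (\<lambda>x. if x \<in> Y then p x else par x)"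
proof -
  define W' where "W' = W \<union> Y"
  define dep' where "dep' = (\<lambda>x. if x \<in> Y then Suc k else dep x)"
  define par' where "par' = (\<lambda>x. if x \<in> Y then p x else par x)"
  have T0: "finite W" "W \<subseteq> V" "u \<in> W" "dep u = 0" "par u = u"
    "\<forall>v\<in>W. v \<noteq> u \<longrightarrow> par v \<in> W \<and> Suc (dep (par v)) = dep v \<and> {par v, v} \<in> E"
    "\<forall>v\<in>W. dep v = 0 \<longrightarrow> v = u" "\<forall>v\<in>W. dep v \<le> k"
    "\<forall>j. 1 \<le> j \<and> j \<le> k \<longrightarrow> card {v\<in>W. dep v = j} = t j"
    "card W \<le> 1 + 2 * t k"
    "\<forall>w\<in>W. w \<noteq> u \<longrightarrow> (\<forall>i. dep w \<le> i \<longrightarrow>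
        real (card (descendants W dep par w i)) \<le> 3^(i - dep w) * real (t i) / real (t (dep w)))"
    using T unfolding layered_tree_def by blast+
  have uY: "u \<notin> Y" using Y(3) T0(3) by auto
  have parW: "\<forall>x\<in>W. par x \<in> W" using T0(3,5,6) by metis
  have agree: "\<forall>x\<in>W. par' x = par x" unfolding par'_def using Y(3) by auto
  have depW: "\<forall>x\<in>W. dep' x = dep x" unfolding dep'_def using Y(3) by auto
  have it: "\<And>v m. v \<in> W \<Longrightarrow> (par'^^m) v = (par^^m) v" using funpow_agree_on_closed[OF agree parW] by blast
  have tS: "t (Suc k) \<ge> 1" using grow tk by simp
  have finY': "finite W'" unfolding W'_def using T0(1) Y(1) by simp
  have descendants_old: "\<And>w i. w \<in> W \<Longrightarrow> i \<le> k \<Longrightarrow> descendants W' dep' par' w i = descendants W dep par w i"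
  proof -
    fix w i assume w: "w \<in> W" and i: "i \<le> k"
    show "descendants W' dep' par' w i = descendants W dep par w i"
      unfolding descendants_def W'_def using depW w i it by (auto simp: dep'_def)
  qed
  have descendants_deeper: "\<And>w i. w \<in> W' \<Longrightarrow> i > Suc k \<Longrightarrow> descendants W' dep' par' w i = {}"
  proof -
    fix w i assume "i > Suc k"
    moreover have "\<forall>v\<in>W'. dep' v \<le> Suc k" unfolding W'_def dep'_def using T0(8) by auto
    ultimately show "descendants W' dep' par' w i = {}" unfolding descendants_def by fastforce
  qed
  have levY: "{v\<in>W'. dep' v = Suc k} = Y"
    unfolding W'_def dep'_def using T0(8) Y(3) by fastforce
  show ?thesis unfolding W'_def[symmetric] dep'_def[symmetric] par'_def[symmetric] layered_tree_def
  proof (intro conjI)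
    show "finite W'" by (rule finY')
    show "W' \<subseteq> V" unfolding W'_def using T0(2) Y(2) by simp
    show "u \<in> W'" unfolding W'_def using T0(3) by simp
    show "dep' u = 0" unfolding dep'_def using uY T0(4) by simp
    show "par' u = u" unfolding par'_def using uY T0(5) by simp
    show "\<forall>v\<in>W'. v \<noteq> u \<longrightarrow> par' v \<in> W' \<and> Suc (dep' (par' v)) = dep' v \<and> {par' v, v} \<in> E"
    proof (intro ballI impI)
      fix v assume v: "v \<in> W'" "v \<noteq> u"
      show "par' v \<in> W' \<and> Suc (dep' (par' v)) = dep' v \<and> {par' v, v} \<in> E"
      proof (cases "v \<in> Y")
        case True
        then have "p v \<in> W" "dep (p v) = k" "{p v, v} \<in> E" using p by auto
        moreover have "p v \<notin> Y" using \<open>p v \<in> W\<close> Y(3) by auto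
        ultimately show ?thesis using True unfolding par'_def dep'_def W'_def by simp
      next
        case False
        then have vW: "v \<in> W" using v unfolding W'_def by auto
        then have "par v \<in> W" "Suc (dep (par v)) = dep v" "{par v, v} \<in> E" using T0(6) v(2) by auto
        moreover have "par v \<notin> Y" using \<open>par v \<in> W\<close> Y(3) by auto
        ultimately show ?thesis using False unfolding par'_def dep'_def W'_def by simp
      qed
    qed
    show "\<forall>v\<in>W'. dep' v = 0 \<longrightarrow> v = u" unfolding W'_def dep'_def using T0(7) by auto
    show "\<forall>v\<in>W'. dep' v \<le> Suc k" unfolding W'_def dep'_def using T0(8) by auto
    show "\<forall>j. 1 \<le> j \<and> j \<le> Suc k \<longrightarrow> card {v\<in>W'. dep' v = j} = t j"
    proof (intro allI impI)
      fix j :: nat assume j: "1 \<le> j \<and> j \<le> Suc k"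
      show "card {v\<in>W'. dep' v = j} = t j"
      proof (cases "j = Suc k")
        case True then show ?thesis using levY Y(4) by simp
      next
        case False
        then have "{v\<in>W'. dep' v = j} = {v\<in>W. dep v = j}" unfolding W'_def dep'_def using j Y(3) by auto
        then show ?thesis using T0(9) j False by simp
      qed
    qed
    show "card W' \<le> 1 + 2 * t (Suc k)"
    proof -
      have "card W' = card W + card Y" unfolding W'_def using T0(1) Y(1,3) card_Un_disjoint[of W Y] by (simp add: Int_commute)
      then show ?thesis using T0(10) Y(4) grow by simp
    qed
    show "\<forall>w\<in>W'. w \<noteq> u \<longrightarrow> (\<forall>i. dep' w \<le> i \<longrightarrow>
        real (card (descendants W' dep' par' w i)) \<le> 3^(i - dep' w) * real (t i) / real (t (dep' w)))"
    proof (intro ballI impI allI)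
      fix w i assume w: "w \<in> W'" "w \<noteq> u" "dep' w \<le> i"
      show "real (card (descendants W' dep' par' w i)) \<le> 3^(i - dep' w) * real (t i) / real (t (dep' w))"
      proof (cases "i > Suc k")
        case True then show ?thesis using descendants_deeper[OF w(1) True] by simp
      next
        case False
        show ?thesis
        proof (cases "w \<in> Y")
          case True
          then have dw: "dep' w = Suc k" unfolding dep'_def by simp
          then have i: "i = Suc k" using False w(3) by simp
          have "descendants W' dep' par' w i = {w}" unfolding descendants_def i dw W'_def using levY True
            unfolding dep'_def by auto
          then show ?thesis using i dw tS by simp
        next
          case wY: False
          then have wW: "w \<in> W" using w(1) unfolding W'_def by auto
          have dw: "dep' w = dep w" using depW wW by simp
          show ?thesis
          proof (cases "i \<le> k")
            case True
            then show ?thesis using descendants_old[OF wW True] T0(11) wW w(2,3) dw by simp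
          next
            case ik: False
            then have i: "i = Suc k" using False by simp
            have "real (card (descendants W' dep' par' w (Suc k)))
                \<le> 3^(Suc k - dep w) * real (t (Suc k)) / real (t (dep w))"
              unfolding W'_def dep'_def par'_def using p
              by (intro descendants_new_layer_le[OF T Y(1,3) _ cap Kk tk wW w(2)]) auto
            then show ?thesis using i dw by simp
          qed
        qed
      qed
    qed
  qed
qed

definition root_path :: "('a \<Rightarrow> 'a) \<Rightarrow> ('a \<Rightarrow> nat) \<Rightarrow> 'a \<Rightarrow> 'a list" where
  "root_path par dep v = map (\<lambda>i. (par^^(dep v - i)) v) [0..<Suc (dep v)]"

lemma root_path_is_path:
  assumes T: "layered_tree V E u k t W dep par" and v: "v \<in> W"
  shows "is_path V E u v (root_path par dep v) \<and> length (root_path par dep v) - 1 \<le> k"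
proof -
  define d where "d = dep v"
  have T0: "W \<subseteq> V" "u \<in> W" "dep u = 0"
    "\<forall>v\<in>W. v \<noteq> u \<longrightarrow> par v \<in> W \<and> Suc (dep (par v)) = dep v \<and> {par v, v} \<in> E"
    "\<forall>v\<in>W. dep v = 0 \<longrightarrow> v = u" "\<forall>v\<in>W. dep v \<le> k"
    using T unfolding layered_tree_def by blast+
  have it: "\<And>m. (par^^m) v \<in> W \<and> dep ((par^^m) v) = d - m" using layered_tree_funpow_parent[OF T v] unfolding d_def by blast
  have len: "length (root_path par dep v) = Suc d" unfolding root_path_def d_def by simp
  have ne: "root_path par dep v \<noteq> []" using len by auto
  have nth: "\<And>i. i < Suc d \<Longrightarrow> root_path par dep v ! i = (par^^(d - i)) v"
    unfolding root_path_def d_def by (simp del: upt_Suc)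
  have "is_path V E u v (root_path par dep v)"
    unfolding is_path_def
  proof (intro conjI)
    show "root_path par dep v \<noteq> []" using len by auto
    show "hd (root_path par dep v) = u"
    proof -
      have "hd (root_path par dep v) = root_path par dep v ! 0" by (rule hd_conv_nth[OF ne])
      also have "\<dots> = (par^^d) v" using nth by simp
      also have "\<dots> = u" using it[of d] T0(5) by simp
      finally show ?thesis .
    qed
    show "last (root_path par dep v) = v"
    proof -
      have "last (root_path par dep v) = root_path par dep v ! d" using len last_conv_nth[OF ne] by simp
      also have "\<dots> = v" using nth by simp
      finally show ?thesis .
    qed
    show "distinct (root_path par dep v)"
    proof -
      have "inj_on (\<lambda>i. (par^^(dep v - i)) v) {0..<Suc (dep v)}"
      proof (rule inj_onI)
        fix i i' assume "i \<in> {0..<Suc (dep v)}" "i' \<in> {0..<Suc (dep v)}"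
          "(par^^(dep v - i)) v = (par^^(dep v - i')) v"
        then show "i = i'" using it[of "dep v - i"] it[of "dep v - i'"] unfolding d_def
          by (metis atLeastLessThan_iff diff_diff_cancel less_Suc_eq_le)
      qed
      then show ?thesis unfolding root_path_def distinct_map by (simp del: upt_Suc)
    qed
    show "set (root_path par dep v) \<subseteq> V" unfolding root_path_def using it T0(1) d_def v by auto
    show "\<forall>i. Suc i < length (root_path par dep v) \<longrightarrow> {root_path par dep v ! i, root_path par dep v ! Suc i} \<in> E"
    proof (intro allI impI)
      fix i assume i: "Suc i < length (root_path par dep v)"
      define z where "z = (par^^(d - Suc i)) v"
      have z: "z \<in> W" "dep z = Suc i" using it[of "d - Suc i"] i len unfolding z_def by auto
      have zu: "z \<noteq> u" using z T0(3) by auto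
      have "d - i = Suc (d - Suc i)" using i len by simp
      then have "root_path par dep v ! i = par z" using nth[of i] i len unfolding z_def by simp
      moreover have "root_path par dep v ! Suc i = z" using nth[of "Suc i"] i len unfolding z_def by simp
      ultimately show "{root_path par dep v ! i, root_path par dep v ! Suc i} \<in> E" using T0(4) z zu by simp
    qed
  qed
  moreover have "length (root_path par dep v) - 1 \<le> k" using len T0(6) v unfolding d_def by simp
  ultimately show ?thesis by blast
qed

lemma paths_through_subset_descendants:
  assumes T: "layered_tree V E u k t W dep par" and w: "w \<in> W"
  shows "{v\<in>W. w \<in> set (root_path par dep v)} \<subseteq> (\<Union>i\<in>{dep w..k}. descendants W dep par w i)"
proof
  fix v assume "v \<in> {v\<in>W. w \<in> set (root_path par dep v)}"
  then have v: "v \<in> W" "w \<in> set (root_path par dep v)" by auto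
  have "w \<in> (\<lambda>i. (par^^(dep v - i)) v) ` {0..<Suc (dep v)}" using v(2) unfolding root_path_def
    by (simp only: set_map set_upt)
  then obtain i where i0: "i \<in> {0..<Suc (dep v)}" "w = (par^^(dep v - i)) v" by blast
  then have i: "i < Suc (dep v)" "w = (par^^(dep v - i)) v" by auto
  have "dep w = dep v - (dep v - i)" using layered_tree_funpow_parent[OF T v(1)] i(2) by simp
  then have dw: "dep w = i" using i(1) by simp
  have "dep v \<le> k" using T v(1) unfolding layered_tree_def by blast
  then have "v \<in> descendants W dep par w (dep v)" "dep v \<in> {dep w..k}"
    unfolding descendants_def using v(1) i dw by auto
  then show "v \<in> (\<Union>i\<in>{dep w..k}. descendants W dep par w i)" by blast
qed

lemma set_root_path_subset:
  assumes "layered_tree V E u k t W dep par" "v \<in> W"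
  shows "set (root_path par dep v) \<subseteq> W"
  unfolding root_path_def using layered_tree_funpow_parent[OF assms] assms(2) by auto

text \<open>The hypotheses of the theorem for one graph and one \<open>n\<close>, together with the three
  inequalities that hold for all sufficiently large \<open>n\<close> (see \<open>eventually_large_n\<close>); the
  constant \<open>C\<close> is assumed positive, which costs nothing since \<open>C\<close> may be enlarged.\<close>

locale dense_F_free_graph =
  fixes V :: "'a set" and E :: "'a set set" and u :: 'a
    and F :: "(nat set \<times> nat set set) set" and n :: nat and \<alpha> \<beta> \<rho> \<delta> C :: real
  assumes exponents: "\<alpha> < 2" "\<beta> < \<alpha>" "1 \<le> \<beta>"
    and constants: "\<rho> > 0" "\<delta> > 0" "C > 0"
    and zar_bound: "\<forall>m n. 0 < m \<longrightarrow> m \<le> n \<longrightarrow>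
      real (zar m n F) \<le> \<rho> * real m * real n powr (\<alpha> - 1) + C * real n powr \<beta>"
    and finite_V: "finite V" and card_V: "card V \<le> n" and bipartite: "bipartite V E"
    and free: "F_free F V E"
    and min_degree: "\<forall>x\<in>V. real (degree V E x) \<ge> \<delta> * real n powr (\<alpha> - 1)"
    and root: "u \<in> V"
    and n_ge_2: "real n \<ge> 2"
    and degree_dominates_error: "32 * 8 powr \<beta> * C * real n powr (\<beta>-1) \<le> \<delta> * real n powr (\<alpha>-1)"
    and degree_dominates_log:
      "real (ell0 \<alpha> \<beta> + 1) * 3^(ell0 \<alpha> \<beta>) * ln (real n) \<le> \<delta> * real n powr (\<alpha>-1)"
    and last_layer_linear: "(\<delta>/(2*\<rho>)) powr (1/(\<alpha>-1)) * real n / 8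
      \<le> layer_coeff \<delta> C \<beta> (ell0 \<alpha> \<beta> - 1) * real n powr growth_exp \<alpha> \<beta> (ell0 \<alpha> \<beta> - 1)"
begin

definition c1 :: real where "c1 = (\<delta>/(2*\<rho>)) powr (1/(\<alpha>-1))"

definition D :: real where "D = \<delta> * real n powr (\<alpha> - 1)"

definition t :: "nat \<Rightarrow> nat" where "t = layer_size D (c1 * real n) C \<beta>"

lemma alpha_gt_1: "1 < \<alpha>"
  using exponents by linarith

lemma c1_pos: "c1 > 0"
  unfolding c1_def using constants by simp

lemma D_pos: "D > 0"
  unfolding D_def using constants n_ge_2 by simp

lemma t_ge_1: "t k \<ge> 1"
  unfolding t_def using layer_size_ge_1 D_pos c1_pos n_ge_2 constants by simp

lemma error_term_small: "2 * C * real n powr (\<beta>-1) < D"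
proof -
  have "8 powr \<beta> \<ge> 1" using exponents by (intro ge_one_powr_ge_zero) auto
  then have "2 * (C * real n powr (\<beta>-1)) < 32 * 8 powr \<beta> * (C * real n powr (\<beta>-1))"
    using constants n_ge_2 by (intro mult_strict_right_mono) auto
  also have "\<dots> = 32 * 8 powr \<beta> * C * real n powr (\<beta>-1)" by (simp add: mult.assoc)
  also have "\<dots> \<le> D" using degree_dominates_error unfolding D_def .
  finally show ?thesis by (simp add: mult.assoc)
qed

lemma degree_ge_D: "x \<in> V \<Longrightarrow> real (degree V E x) \<ge> D"
  using min_degree unfolding D_def by blast

lemma bipartition:
  obtains A B where "A \<inter> B = {}" "A \<union> B = V" "\<forall>e\<in>E. \<exists>a\<in>A. \<exists>b\<in>B. e = {a, b}"
  using bipartite unfolding bipartite_def by blast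

lemma nbhd_set_expansion:
  assumes AB: "A \<inter> B = {}" "A \<union> B = V" "\<forall>e\<in>E. \<exists>a\<in>A. \<exists>b\<in>B. e = {a, b}"
    and X: "X \<subseteq> A" "X \<noteq> {}"
  shows "min (c1 * real n) ((real (card X) * D / (2*C)) powr (1/\<beta>)) \<le> real (card (nbhd_set V E X))"
proof -
  define p where "p = real (card X)"
  define y where "y = real (card (nbhd_set V E X))"
  have XV: "X \<subseteq> V" using X AB by auto
  have finX: "finite X" using XV finite_V finite_subset by blast
  have finY: "finite (nbhd_set V E X)" using nbhd_set_subset finite_V by (rule finite_subset)
  have p1: "1 \<le> p" unfolding p_def using finX X(2) by (simp add: Suc_le_eq card_gt_0_iff)
  have pn: "p \<le> real n"
    unfolding p_def using card_mono[OF finite_V XV] card_V by linarith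
  obtain a where a: "a \<in> X" using X(2) by blast
  have "real (card (nbhd V E a)) \<ge> D" using degree_ge_D[of a] a XV degree_eq_card_nbhd[of V E a] by auto
  then have "card (nbhd V E a) > 0" using D_pos by linarith
  then have "nbhd V E a \<noteq> {}" by auto
  then have "nbhd_set V E X \<noteq> {}" using a unfolding nbhd_set_def by auto
  then have y0: "y > 0" unfolding y_def using finY by (simp add: card_gt_0_iff)
  have edges: "p * D \<le> real (\<Sum>x\<in>X. degree V E x)"
  proof -
    have "p * D = (\<Sum>x\<in>X. D)" unfolding p_def by simp
    also have "\<dots> \<le> (\<Sum>x\<in>X. real (degree V E x))" using degree_ge_D XV by (intro sum_mono) auto
    finally show ?thesis by simp
  qed
  note zar_XY = sum_degree_le_zar[OF finite_V AB free X(1)]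
  have balanced: "p * D \<le> \<rho> * p * y powr (\<alpha>-1) + C * y powr \<beta>" if "p \<le> y"
  proof -
    have "0 < card X" "card X \<le> card (nbhd_set V E X)" using that p1 unfolding p_def y_def by auto
    then have "real (zar (card X) (card (nbhd_set V E X)) F) \<le> \<rho> * p * y powr (\<alpha>-1) + C * y powr \<beta>"
      using zar_bound unfolding p_def y_def by blast
    then show ?thesis using edges zar_XY(1) by (meson of_nat_le_iff order_trans)
  qed
  have unbalanced: "p * D \<le> \<rho> * y * p powr (\<alpha>-1) + C * p powr \<beta>" if "y < p"
  proof -
    have "0 < card (nbhd_set V E X)" "card (nbhd_set V E X) \<le> card X"
      using that y0 unfolding p_def y_def by auto
    then have "real (zar (card (nbhd_set V E X)) (card X) F) \<le> \<rho> * y * p powr (\<alpha>-1) + C * p powr \<beta>"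
      using zar_bound unfolding p_def y_def by blast
    then show ?thesis using edges zar_XY(2) by (meson of_nat_le_iff order_trans)
  qed
  show ?thesis
    using expansion_bound[OF p1 pn y0 constants(1,3) alpha_gt_1 exponents(1,3) constants(2) D_def
        error_term_small balanced unbalanced]
    unfolding c1_def p_def y_def .
qed

text \<open>Greedily give every vertex of the deepest layer at most \<open>K\<close> new children. Either half
  the layer receives its full quota, or the unsaturated half has all its neighbours inside the
  tree, and then expansion makes the tree larger than it can be.\<close>

lemma next_layer_candidates:
  assumes AB: "A \<inter> B = {}" "A \<union> B = V" "\<forall>e\<in>E. \<exists>a\<in>A. \<exists>b\<in>B. e = {a, b}"
    and T: "layered_tree V E u k t W dep par" and XA: "{v\<in>W. dep v = k} \<subseteq> A" and k: "k \<ge> 1"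
    and room: "real (t (Suc k)) + 1 + 2 * real (t k)
      \<le> min (c1 * real n) ((real (t k) * D / (4*C)) powr (1/\<beta>))"
  obtains Y p where "finite Y" "Y \<inter> W = {}" "card Y \<ge> t (Suc k)"
    "\<forall>y\<in>Y. p y \<in> {v\<in>W. dep v = k} \<and> y \<in> nbhd V E (p y)"
    "\<forall>a\<in>{v\<in>W. dep v = k}. card {y\<in>Y. p y = a} \<le> nat \<lceil>2 * real (t (Suc k)) / real (t k)\<rceil>"
proof -
  define X where "X = {v\<in>W. dep v = k}"
  define K where "K = nat \<lceil>2 * real (t (Suc k)) / real (t k)\<rceil>"
  have T0: "finite W" "W \<subseteq> V" "card X = t k" "card W \<le> 1 + 2 * t k"
    using T k unfolding layered_tree_def X_def by auto
  have finX: "finite X" unfolding X_def using T0(1) by simp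
  have finN: "\<forall>a\<in>X. finite (nbhd V E a)" unfolding nbhd_def using finite_V by simp
  obtain Y p where Yp: "finite Y" "Y \<inter> W = {}" "\<forall>y\<in>Y. p y \<in> X \<and> y \<in> nbhd V E (p y)"
     "\<forall>a\<in>X. card {y\<in>Y. p y = a} \<le> K" "\<forall>a\<in>X. card {y\<in>Y. p y = a} = K \<or> nbhd V E a \<subseteq> Y \<union> W"
    using greedy_capped_assignment[OF finX finN, of W K] by blast
  define Full where "Full = {a\<in>X. card {y\<in>Y. p y = a} = K}"
  define Part where "Part = X - Full"
  have tk: "real (t k) \<ge> 1" using t_ge_1 by simp
  have "card Y \<ge> t (Suc k)"
  proof (cases "real (card Full) \<ge> real (t k) / 2")
    case True
    have finF: "finite Full" unfolding Full_def using finX by simp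
    have "card Full * K = (\<Sum>a\<in>Full. card {y\<in>Y. p y = a})" unfolding Full_def by simp
    also have "\<dots> = card (\<Union>a\<in>Full. {y\<in>Y. p y = a})"
      by (rule card_UN_disjoint[symmetric]) (use finF Yp(1) in auto)
    also have "\<dots> \<le> card Y" using Yp(1) by (intro card_mono) auto
    finally have c: "real (card Full) * real K \<le> real (card Y)" by (metis of_nat_le_iff of_nat_mult)
    have "real (t (Suc k)) = (real (t k) / 2) * (2 * real (t (Suc k)) / real (t k))" using tk by simp
    also have "\<dots> \<le> real (card Full) * real K"
      using True tk unfolding K_def by (intro mult_mono) auto
    finally show ?thesis using c by linarith
  next
    case False
    have "card Full \<le> card X" unfolding Full_def using finX by (intro card_mono) auto
    moreover have "card Part = card X - card Full" unfolding Part_def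
      by (rule card_Diff_subset) (use finX in \<open>auto simp: Full_def\<close>)
    ultimately have Part_big: "real (card Part) > real (t k) / 2" using T0(3) False by linarith
    then have "Part \<noteq> {}" using tk by auto
    moreover have "Part \<subseteq> A" using XA unfolding Part_def X_def by auto
    ultimately have "min (c1 * real n) ((real (card Part) * D / (2*C)) powr (1/\<beta>))
        \<le> real (card (nbhd_set V E Part))"
      using nbhd_set_expansion[OF AB] by blast
    moreover have "(real (t k) * D / (4*C)) powr (1/\<beta>) \<le> (real (card Part) * D / (2*C)) powr (1/\<beta>)"
      using Part_big D_pos constants exponents tk by (intro powr_mono2) (auto simp: field_simps)
    ultimately have expand: "min (c1 * real n) ((real (t k) * D / (4*C)) powr (1/\<beta>))
        \<le> real (card (nbhd_set V E Part))"
      unfolding min_le_iff_disj by linarith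
    have "nbhd_set V E Part \<subseteq> Y \<union> W"
    proof
      fix z assume "z \<in> nbhd_set V E Part"
      then obtain a where a: "a \<in> Part" "z \<in> nbhd V E a" unfolding nbhd_set_def by blast
      then have "nbhd V E a \<subseteq> Y \<union> W" using Yp(5) unfolding Part_def Full_def by auto
      then show "z \<in> Y \<union> W" using a(2) by auto
    qed
    then have "card (nbhd_set V E Part) \<le> card (Y \<union> W)" using Yp(1) T0(1) by (intro card_mono) auto
    also have "\<dots> \<le> card Y + card W" by (rule card_Un_le)
    finally have "card (nbhd_set V E Part) \<le> card Y + card W" .
    then show ?thesis using expand room T0(4) by linarith
  qed
  then show ?thesis using that[of Y p] Yp(1-4) unfolding X_def K_def by simp
qed

lemma layered_tree_grow:
  assumes AB: "A \<inter> B = {}" "A \<union> B = V" "\<forall>e\<in>E. \<exists>a\<in>A. \<exists>b\<in>B. e = {a, b}"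
    and T: "layered_tree V E u k t W dep par" and XA: "{v\<in>W. dep v = k} \<subseteq> A" and k: "k \<ge> 1"
    and grow: "2 * t k \<le> t (Suc k)"
    and room: "real (t (Suc k)) + 1 + 2 * real (t k)
      \<le> min (c1 * real n) ((real (t k) * D / (4*C)) powr (1/\<beta>))"
  shows "\<exists>W' dep' par'. layered_tree V E u (Suc k) t W' dep' par' \<and> {v\<in>W'. dep' v = Suc k} \<subseteq> B"
proof -
  define K where "K = nat \<lceil>2 * real (t (Suc k)) / real (t k)\<rceil>"
  obtain Y p where Y: "finite Y" "Y \<inter> W = {}" "card Y \<ge> t (Suc k)"
      "\<forall>y\<in>Y. p y \<in> {v\<in>W. dep v = k} \<and> y \<in> nbhd V E (p y)"
      "\<forall>a\<in>{v\<in>W. dep v = k}. card {y\<in>Y. p y = a} \<le> K"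
    using next_layer_candidates[OF AB T XA k room] unfolding K_def by blast
  obtain Y' where Y': "Y' \<subseteq> Y" "card Y' = t (Suc k)" "finite Y'"
    using obtain_subset_with_card_n[OF Y(3)] by blast
  have pY: "\<forall>y\<in>Y'. p y \<in> W \<and> dep (p y) = k \<and> {p y, y} \<in> E"
    using Y(4) Y'(1) unfolding nbhd_def by auto
  have cap: "\<forall>z\<in>W. dep z = k \<longrightarrow> card {y\<in>Y'. p y = z} \<le> K"
  proof (intro ballI impI)
    fix z assume "z \<in> W" "dep z = k"
    then have "card {y\<in>Y. p y = z} \<le> K" using Y(5) by auto
    moreover have "card {y\<in>Y'. p y = z} \<le> card {y\<in>Y. p y = z}"
      using Y'(1) Y(1) by (intro card_mono) auto
    ultimately show "card {y\<in>Y'. p y = z} \<le> K" by simp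
  qed
  have tk: "real (t k) \<ge> 1" using t_ge_1 by simp
  have "2 * real (t (Suc k)) / real (t k) \<ge> 1" using grow tk by (simp add: field_simps)
  then have "real K \<le> 2 * real (t (Suc k)) / real (t k) + 1" unfolding K_def by linarith
  also have "\<dots> \<le> 3 * real (t (Suc k)) / real (t k)" using grow tk by (simp add: field_simps)
  finally have Kle: "real K \<le> 3 * real (t (Suc k)) / real (t k)" .
  have YV: "Y' \<subseteq> V" using Y(4) Y'(1) unfolding nbhd_def by auto
  have newT: "layered_tree V E u (Suc k) t (W \<union> Y') (\<lambda>x. if x \<in> Y' then Suc k else dep x)
      (\<lambda>x. if x \<in> Y' then p x else par x)"
    by (rule layered_tree_add_layer[OF T k Y'(3) YV _ Y'(2) pY cap Kle grow t_ge_1])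
      (use Y'(1) Y(2) in auto)
  have "{v\<in>W \<union> Y'. (if v \<in> Y' then Suc k else dep v) = Suc k} \<subseteq> B"
  proof
    fix v assume v: "v \<in> {v\<in>W \<union> Y'. (if v \<in> Y' then Suc k else dep v) = Suc k}"
    have "v \<in> Y'"
    proof (rule ccontr)
      assume "v \<notin> Y'"
      then have "v \<in> W" "dep v = Suc k" using v by auto
      then show False using T unfolding layered_tree_def by fastforce
    qed
    then have "p v \<in> {v\<in>W. dep v = k}" "v \<in> nbhd V E (p v)" using Y(4) Y'(1) by auto
    then show "v \<in> B" using nbhd_other_side[OF AB(1) AB(3)] XA by blast
  qed
  then show ?thesis using newT by blast
qed

definition stop_level :: nat where
  "stop_level = (LEAST j. 1 \<le> j \<and> c1 * real n / 8 \<le> real (t j))"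

lemma stop_level:
  shows "1 \<le> stop_level" and "c1 * real n / 8 \<le> real (t stop_level)"
    and "stop_level \<le> ell0 \<alpha> \<beta>"
proof -
  define L where "L = ell0 \<alpha> \<beta>"
  have L2: "L \<ge> 2" unfolding L_def using ell0_ge_2 exponents by blast
  have SL: "Suc (L-1) = L" using L2 by simp
  have "real n > 0" "c1 * real n > 0" using n_ge_2 c1_pos by auto
  from layer_size_growth[OF D_def constants(2,3) exponents(3) this, of "L-1"]
  have growth: "(\<exists>j\<in>{1..L}. c1 * real n / 8 \<le> real (t j))
      \<or> layer_coeff \<delta> C \<beta> (L-1) * real n powr (growth_exp \<alpha> \<beta> (L-1)) \<le> real (t L)"
    unfolding t_def SL .
  have "\<exists>j\<in>{1..L}. c1 * real n / 8 \<le> real (t j)"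
  proof (rule disjE[OF growth])
    assume "layer_coeff \<delta> C \<beta> (L-1) * real n powr (growth_exp \<alpha> \<beta> (L-1)) \<le> real (t L)"
    moreover have "c1 * real n / 8 \<le> layer_coeff \<delta> C \<beta> (L-1) * real n powr (growth_exp \<alpha> \<beta> (L-1))"
      using last_layer_linear unfolding c1_def L_def .
    ultimately show ?thesis using L2 by (intro bexI[of _ L]) auto
  qed
  then obtain j where j: "1 \<le> j" "c1 * real n / 8 \<le> real (t j)" "j \<le> L" by auto
  have "1 \<le> stop_level \<and> c1 * real n / 8 \<le> real (t stop_level)"
    unfolding stop_level_def by (rule LeastI[of _ j]) (use j in simp)
  then show "1 \<le> stop_level" "c1 * real n / 8 \<le> real (t stop_level)" by auto
  have "stop_level \<le> j" unfolding stop_level_def by (rule Least_le) (use j in simp)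
  then show "stop_level \<le> ell0 \<alpha> \<beta>" using j(3) unfolding L_def by simp
qed

lemma below_stop_level:
  assumes "1 \<le> k" "k < stop_level"
  shows "real (t k) < c1 * real n / 8"
proof -
  have "\<not> (1 \<le> k \<and> c1 * real n / 8 \<le> real (t k))"
    using assms(2) unfolding stop_level_def by (rule not_less_Least)
  then show ?thesis using assms(1) by simp
qed

lemma layer_size_le_n:
  assumes "layered_tree V E u k t W dep par" "1 \<le> j" "j \<le> k"
  shows "t j \<le> n"
proof -
  have "t j = card {v\<in>W. dep v = j}" "{v\<in>W. dep v = j} \<subseteq> V"
    using assms unfolding layered_tree_def by auto
  then show ?thesis using card_mono[OF finite_V] card_V by (metis le_trans)
qed

lemma layer_size_step_below_stop:
  assumes "1 \<le> k" "k < stop_level" "t k \<le> n"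
  shows "2 * t k \<le> t (Suc k)"
    and "real (t (Suc k)) + 1 + 2 * real (t k) \<le> min (c1 * real n) ((real (t k) * D / (4*C)) powr (1/\<beta>))"
proof -
  have "real (layer_size D (c1 * real n) C \<beta> k) \<le> real n"
    and "real (layer_size D (c1 * real n) C \<beta> k) < c1 * real n / 8"
    using assms(3) below_stop_level[OF assms(1,2)] unfolding t_def by auto
  from layer_size_step[OF D_pos constants(3) exponents(3) assms(1) this degree_dominates_error[folded D_def]]
  show "2 * t k \<le> t (Suc k)"
    and "real (t (Suc k)) + 1 + 2 * real (t k) \<le> min (c1 * real n) ((real (t k) * D / (4*C)) powr (1/\<beta>))"
    unfolding t_def by auto
qed

lemma layered_tree_first_layer:
  assumes AB: "A \<inter> B = {}" "A \<union> B = V" "\<forall>e\<in>E. \<exists>a\<in>A. \<exists>b\<in>B. e = {a, b}"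
  shows "\<exists>W dep par. layered_tree V E u 1 t W dep par \<and>
    ({v\<in>W. dep v = 1} \<subseteq> A \<or> {v\<in>W. dep v = 1} \<subseteq> B)"
proof -
  have "real (degree V E u) \<ge> D" using degree_ge_D root by blast
  then have "t 1 \<le> card (nbhd V E u)" unfolding t_def degree_eq_card_nbhd by simp
  then obtain X where X: "X \<subseteq> nbhd V E u" "card X = t 1" by (rule obtain_subset_with_card_n)
  have "u \<notin> nbhd V E u"
  proof
    assume "u \<in> nbhd V E u"
    then have "{u, u} \<in> E" unfolding nbhd_def by simp
    then obtain a b where "a \<in> A" "b \<in> B" "{u, u} = {a, b}" using AB(3) by blast
    then show False using AB(1) by (auto simp: doubleton_eq_iff)
  qed
  then have "u \<notin> X" using X(1) by blast
  have tree: "layered_tree V E u 1 t (insert u X) (\<lambda>x. if x \<in> X then 1 else 0) (\<lambda>x. u)"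
    by (rule layered_tree_star[where t=t, OF root X finite_V]) (use \<open>u \<notin> X\<close> t_ge_1 in auto)
  have layer: "{v \<in> insert u X. (if v \<in> X then 1 else 0) = (1::nat)} = X" by auto
  have "X \<subseteq> A \<or> X \<subseteq> B"
  proof (cases "u \<in> A")
    case True
    then have "X \<subseteq> B" using nbhd_other_side[OF AB(1,3) True] X(1) by blast
    then show ?thesis ..
  next
    case False
    then have "u \<in> B" using AB(2) root by auto
    moreover have "B \<inter> A = {}" using AB(1) by auto
    ultimately have "X \<subseteq> A" using nbhd_other_side[OF _ bipartite_swap[OF AB(3)]] X(1) by blast
    then show ?thesis ..
  qed
  then have "{v \<in> insert u X. (if v \<in> X then 1 else 0) = (1::nat)} \<subseteq> A
      \<or> {v \<in> insert u X. (if v \<in> X then 1 else 0) = (1::nat)} \<subseteq> B"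
    unfolding layer .
  then show ?thesis using tree by blast
qed

text \<open>Each new layer lies on the side opposite to the previous one, so the layers alternate
  between the two parts of the bipartition.\<close>

lemma layered_tree_exists:
  assumes AB: "A \<inter> B = {}" "A \<union> B = V" "\<forall>e\<in>E. \<exists>a\<in>A. \<exists>b\<in>B. e = {a, b}"
    and "1 \<le> k" "k \<le> stop_level"
  shows "\<exists>W dep par. layered_tree V E u k t W dep par \<and>
    ({v\<in>W. dep v = k} \<subseteq> A \<or> {v\<in>W. dep v = k} \<subseteq> B)"
  using assms(4,5)
proof (induction k rule: dec_induct)
  case base
  show ?case by (rule layered_tree_first_layer[OF AB])
next
  case (step k)
  have k: "1 \<le> k" "k < stop_level" using step.hyps step.prems by auto
  obtain W dep par where T: "layered_tree V E u k t W dep par"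
    and side: "{v\<in>W. dep v = k} \<subseteq> A \<or> {v\<in>W. dep v = k} \<subseteq> B"
    using step.IH k(2) by auto
  note nums = layer_size_step_below_stop[OF k layer_size_le_n[OF T k(1) order_refl]]
  have BA: "B \<inter> A = {}" "B \<union> A = V" using AB(1,2) by auto
  show ?case
  proof (cases "{v\<in>W. dep v = k} \<subseteq> A")
    case True
    obtain W' dep' par' where "layered_tree V E u (Suc k) t W' dep' par'" "{v\<in>W'. dep' v = Suc k} \<subseteq> B"
      using layered_tree_grow[OF AB T True k(1) nums] by blast
    then show ?thesis by blast
  next
    case False
    then have "{v\<in>W. dep v = k} \<subseteq> B" using side by blast
    then obtain W' dep' par' where "layered_tree V E u (Suc k) t W' dep' par'" "{v\<in>W'. dep' v = Suc k} \<subseteq> A"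
      using layered_tree_grow[OF BA bipartite_swap[OF AB(3)] T _ k(1) nums] by blast
    then show ?thesis by blast
  qed
qed

lemma D_le_layer_size:
  assumes T: "layered_tree V E u stop_level t W dep par" and j: "1 \<le> j" "j \<le> stop_level"
  shows "D \<le> real (t j)"
  using j
proof (induction j rule: dec_induct)
  case base
  show ?case unfolding t_def by simp linarith
next
  case (step j)
  have j: "1 \<le> j" "j < stop_level" using step.hyps step.prems by auto
  have "2 * t j \<le> t (Suc j)"
    using layer_size_step_below_stop(1)[OF j layer_size_le_n[OF T j(1)]] j by simp
  then show ?case using step.IH j by simp
qed

text \<open>A vertex of depth \<open>j\<close> lies exactly on the root paths of its descendants, and there
  are at most \<open>3^(i-j) * t i / t j \<le> 3^ell0 * n / D\<close> of them in each layer \<open>i\<close>.\<close>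

lemma root_path_congestion:
  assumes T: "layered_tree V E u stop_level t W dep par" and w: "w \<in> W" "w \<noteq> u"
  shows "real (card {v\<in>W. w \<in> set (root_path par dep v)}) \<le> real n / ln (real n)"
proof -
  define L where "L = ell0 \<alpha> \<beta>"
  define j where "j = dep w"
  have T0: "finite W" "\<forall>v\<in>W. dep v = 0 \<longrightarrow> v = u" "\<forall>v\<in>W. dep v \<le> stop_level"
    "\<forall>w\<in>W. w \<noteq> u \<longrightarrow> (\<forall>i. dep w \<le> i \<longrightarrow>
        real (card (descendants W dep par w i)) \<le> 3^(i - dep w) * real (t i) / real (t (dep w)))"
    using T unfolding layered_tree_def by auto
  have j1: "1 \<le> j" using T0(2) w unfolding j_def by (cases "dep w") auto
  have jL: "j \<le> stop_level" using T0(3) w unfolding j_def by simp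
  have level: "real (card (descendants W dep par w i)) \<le> 3^L * real n / D" if i: "i \<in> {j..stop_level}" for i
  proof -
    have "(3::real)^(i - j) \<le> 3^L" using i stop_level(3) unfolding L_def by (intro power_increasing) auto
    moreover have "real (t i) \<le> real n" using layer_size_le_n[OF T] i j1 by auto
    ultimately have "3^(i - j) * real (t i) \<le> 3^L * real n" by (intro mult_mono) auto
    then have "3^(i - j) * real (t i) / real (t j) \<le> 3^L * real n / real (t j)"
      by (intro divide_right_mono) auto
    also have "\<dots> \<le> 3^L * real n / D"
      using D_le_layer_size[OF T j1 jL] D_pos by (intro divide_left_mono) auto
    finally have "3^(i - j) * real (t i) / real (t j) \<le> 3^L * real n / D" .
    moreover have "real (card (descendants W dep par w i)) \<le> 3^(i - j) * real (t i) / real (t j)"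
      using T0(4) w i unfolding j_def by auto
    ultimately show ?thesis by linarith
  qed
  have "card {v\<in>W. w \<in> set (root_path par dep v)} \<le> card (\<Union>i\<in>{j..stop_level}. descendants W dep par w i)"
    using paths_through_subset_descendants[OF T w(1)] unfolding j_def
    by (intro card_mono) (auto simp: descendants_def T0(1))
  also have "\<dots> \<le> (\<Sum>i\<in>{j..stop_level}. card (descendants W dep par w i))" by (rule card_UN_le) simp
  finally have "real (card {v\<in>W. w \<in> set (root_path par dep v)})
      \<le> (\<Sum>i\<in>{j..stop_level}. real (card (descendants W dep par w i)))"
    by (metis of_nat_le_iff of_nat_sum)
  also have "\<dots> \<le> (\<Sum>i\<in>{j..stop_level}. 3^L * real n / D)" by (rule sum_mono) (rule level)
  also have "\<dots> = real (card {j..stop_level}) * (3^L * real n / D)" by simp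
  also have "\<dots> \<le> real (L + 1) * (3^L * real n / D)"
    using stop_level(3) D_pos unfolding L_def by (intro mult_right_mono) auto
  also have "\<dots> \<le> real n / ln (real n)"
  proof -
    have "ln (real n) > 0" using n_ge_2 by simp
    then have "real (L + 1) * 3^L \<le> D / ln (real n)"
      using degree_dominates_log unfolding L_def D_def by (simp add: field_simps)
    then have "real n * (real (L + 1) * 3^L) / D \<le> real n * (D / ln (real n)) / D"
      using D_pos by (intro divide_right_mono mult_left_mono) auto
    then show ?thesis using D_pos by (simp add: mult_ac)
  qed
  finally show ?thesis .
qed

theorem short_paths_low_congestion:
  "\<exists>S P. S \<subseteq> V \<and> real (card S) \<ge> (\<delta>/(2*\<rho>)) powr (1/(\<alpha>-1)) / 8 * real n \<and>
     (\<forall>v\<in>S. is_path V E u v (P v) \<and> length (P v) - 1 \<le> ell0 \<alpha> \<beta>) \<and>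
     (\<forall>w\<in>V. w \<noteq> u \<longrightarrow> real (card {v\<in>S. w \<in> set (P v)}) \<le> real n / ln (real n))"
proof -
  obtain A B where AB: "A \<inter> B = {}" "A \<union> B = V" "\<forall>e\<in>E. \<exists>a\<in>A. \<exists>b\<in>B. e = {a, b}"
    by (rule bipartition)
  obtain W dep par where T: "layered_tree V E u stop_level t W dep par"
    using layered_tree_exists[OF AB stop_level(1) order_refl] by blast
  have "finite W" "W \<subseteq> V" "card {v\<in>W. dep v = stop_level} = t stop_level"
    using T stop_level(1) unfolding layered_tree_def by auto
  moreover have "card {v\<in>W. dep v = stop_level} \<le> card W" using \<open>finite W\<close> by (intro card_mono) auto
  ultimately have "real (card W) \<ge> (\<delta>/(2*\<rho>)) powr (1/(\<alpha>-1)) / 8 * real n"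
    using stop_level(2) unfolding c1_def by simp
  moreover have "is_path V E u v (root_path par dep v) \<and> length (root_path par dep v) - 1 \<le> ell0 \<alpha> \<beta>"
    if "v \<in> W" for v
    using root_path_is_path[OF T that] stop_level(3) by simp
  moreover have "real (card {v\<in>W. w \<in> set (root_path par dep v)}) \<le> real n / ln (real n)"
    if "w \<in> V" "w \<noteq> u" for w
  proof (cases "w \<in> W")
    case True
    show ?thesis by (rule root_path_congestion[OF T True that(2)])
  next
    case False
    then have "{v\<in>W. w \<in> set (root_path par dep v)} = {}" using set_root_path_subset[OF T] by blast
    moreover have "real n / ln (real n) \<ge> 0" using n_ge_2 by simp
    ultimately show ?thesis by (simp only: card.empty of_nat_0)
  qed
  ultimately show ?thesis using \<open>W \<subseteq> V\<close> by (intro exI[of _ W] exI[of _ "root_path par dep"]) auto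
qed

end

lemma zar_bound_mono_constant:
  fixes \<rho> \<alpha> \<beta> C C' :: real
  assumes bound: "\<forall>m n. 0 < m \<longrightarrow> m \<le> n \<longrightarrow>
      real (zar m n F) \<le> \<rho> * real m * real n powr (\<alpha> - 1) + C * real n powr \<beta>"
    and "C \<le> C'"
  shows "\<forall>m n. 0 < m \<longrightarrow> m \<le> n \<longrightarrow>
      real (zar m n F) \<le> \<rho> * real m * real n powr (\<alpha> - 1) + C' * real n powr \<beta>"
proof (intro allI impI)
  fix m n :: nat assume "0 < m" "m \<le> n"
  then have "real (zar m n F) \<le> \<rho> * real m * real n powr (\<alpha> - 1) + C * real n powr \<beta>"
    using bound by blast
  moreover have "C * real n powr \<beta> \<le> C' * real n powr \<beta>" using assms(2) by (intro mult_right_mono) auto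
  ultimately show "real (zar m n F) \<le> \<rho> * real m * real n powr (\<alpha> - 1) + C' * real n powr \<beta>"
    by linarith
qed

lemma short_paths_low_congestion_eventually:
  fixes \<alpha> \<beta> \<rho> \<delta> C :: real and F :: "(nat set \<times> nat set set) set"
  assumes "\<alpha> < 2" "\<beta> < \<alpha>" "1 \<le> \<beta>" "\<rho> > 0" "\<delta> > 0"
    and zar: "\<forall>m n. 0 < m \<longrightarrow> m \<le> n \<longrightarrow>
      real (zar m n F) \<le> \<rho> * real m * real n powr (\<alpha> - 1) + C * real n powr \<beta>"
  shows "\<exists>N. \<forall>n\<ge>N. \<forall>(V :: 'a set) E u.
       finite V \<and> card V \<le> n \<and> bipartite V E \<and> F_free F V E \<and>
       (\<forall>x\<in>V. real (degree V E x) \<ge> \<delta> * real n powr (\<alpha> - 1)) \<and> u \<in> V \<longrightarrow>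
       (\<exists>S P. S \<subseteq> V \<and> real (card S) \<ge> (\<delta>/(2*\<rho>)) powr (1/(\<alpha>-1)) / 8 * real n \<and>
          (\<forall>v\<in>S. is_path V E u v (P v) \<and> length (P v) - 1 \<le> ell0 \<alpha> \<beta>) \<and>
          (\<forall>w\<in>V. w \<noteq> u \<longrightarrow> real (card {v\<in>S. w \<in> set (P v)}) \<le> real n / ln (real n)))"
proof -
  have zar': "\<forall>m n. 0 < m \<longrightarrow> m \<le> n \<longrightarrow>
    real (zar m n F) \<le> \<rho> * real m * real n powr (\<alpha> - 1) + max C 1 * real n powr \<beta>"
    using zar by (rule zar_bound_mono_constant) simp
  have "max C 1 > 0" by simp
  from eventually_large_n[OF assms(1-5) this] obtain N where N: "\<forall>n\<ge>N. real n \<ge> 2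
    \<and> 32 * 8 powr \<beta> * max C 1 * real n powr (\<beta>-1) \<le> \<delta> * real n powr (\<alpha>-1)
    \<and> real (ell0 \<alpha> \<beta> + 1) * 3^(ell0 \<alpha> \<beta>) * ln (real n) \<le> \<delta> * real n powr (\<alpha>-1)
    \<and> (\<delta>/(2*\<rho>)) powr (1/(\<alpha>-1)) * real n / 8
      \<le> layer_coeff \<delta> (max C 1) \<beta> (ell0 \<alpha> \<beta> - 1) * real n powr growth_exp \<alpha> \<beta> (ell0 \<alpha> \<beta> - 1)"
    by blast
  have graph: "dense_F_free_graph V E u F n \<alpha> \<beta> \<rho> \<delta> (max C 1)"
    if "N \<le> n" "finite V \<and> card V \<le> n \<and> bipartite V E \<and> F_free F V E \<and>
       (\<forall>x\<in>V. real (degree V E x) \<ge> \<delta> * real n powr (\<alpha> - 1)) \<and> u \<in> V"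
    for n and V :: "'a set" and E u
    using assms zar' N that by unfold_locales auto
  show ?thesis
    by (intro exI[of _ N] allI impI) (rule dense_F_free_graph.short_paths_low_congestion[OF graph])
qed

theorem mainTheorem5:
  fixes \<alpha> \<beta> \<rho> \<delta> :: real
  assumes "\<alpha> < 2" and "\<beta> < \<alpha>" and "1 \<le> \<beta>" and "\<rho> > 0" and "\<delta> > 0"
  shows "\<exists>\<mu>'>0. \<forall>(F :: (nat set \<times> nat set set) set) (C :: real).
    (\<forall>H\<in>F. finite (fst H) \<and> bipartite (fst H) (snd H)) \<longrightarrow>
    (\<forall>m n. 0 < m \<longrightarrow> m \<le> n \<longrightarrow>
        real (zar m n F) \<le> \<rho> * real m * real n powr (\<alpha> - 1) + C * real n powr \<beta>) \<longrightarrow>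
    (\<exists>N. \<forall>n\<ge>N. \<forall>(V :: 'a set) E u.
       finite V \<and> card V \<le> n \<and> bipartite V E \<and> F_free F V E \<and>
       (\<forall>x\<in>V. real (degree V E x) \<ge> \<delta> * real n powr (\<alpha> - 1)) \<and> u \<in> V \<longrightarrow>
       (\<exists>S P. S \<subseteq> V \<and> real (card S) \<ge> \<mu>' * real n \<and>
          (\<forall>v\<in>S. is_path V E u v (P v) \<and> length (P v) - 1 \<le> ell0 \<alpha> \<beta>) \<and>
          (\<forall>w\<in>V. w \<noteq> u \<longrightarrow> real (card {v\<in>S. w \<in> set (P v)}) \<le> real n / ln (real n))))"
proof (intro exI[of _ "(\<delta>/(2*\<rho>)) powr (1/(\<alpha>-1)) / 8"] conjI allI impI)
  show "(\<delta>/(2*\<rho>)) powr (1/(\<alpha>-1)) / 8 > 0" using assms by simp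
next
  fix F :: "(nat set \<times> nat set set) set" and C :: real
  assume "\<forall>m n. 0 < m \<longrightarrow> m \<le> n \<longrightarrow>
    real (zar m n F) \<le> \<rho> * real m * real n powr (\<alpha> - 1) + C * real n powr \<beta>"
  then show "\<exists>N. \<forall>n\<ge>N. \<forall>(V :: 'a set) E u.
       finite V \<and> card V \<le> n \<and> bipartite V E \<and> F_free F V E \<and>
       (\<forall>x\<in>V. real (degree V E x) \<ge> \<delta> * real n powr (\<alpha> - 1)) \<and> u \<in> V \<longrightarrow>
       (\<exists>S P. S \<subseteq> V \<and> real (card S) \<ge> (\<delta>/(2*\<rho>)) powr (1/(\<alpha>-1)) / 8 * real n \<and>
          (\<forall>v\<in>S. is_path V E u v (P v) \<and> length (P v) - 1 \<le> ell0 \<alpha> \<beta>) \<and>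
          (\<forall>w\<in>V. w \<noteq> u \<longrightarrow> real (card {v\<in>S. w \<in> set (P v)}) \<le> real n / ln (real n)))"
    by (rule short_paths_low_congestion_eventually[OF assms])
qed

end
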